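(* Consider the Hadamard walk, i.e. the quantum random walk determined by $U=H=\frac{1}{\sqrt2}\begin{pmatrix}1&1\\1&-1\end{pmatrix}$. (a) For every $\varphi={}^t[\alpha,\beta]$ with $|\alpha|=|\beta|=1/\sqrt2$ and $\alpha\overline\beta+\overline\alpha\beta=0$, one has $E(X_n^{\varphi})=0$ for all $n$ and $\mathrm{sd}(X_n^{\varphi})/n\to\sqrt{(2-\sqrt2)/2}$ as $n\to\infty$. (b) For $\varphi={}^t[0,e^{i\theta}]$, $\theta\in[0,2\pi)$, $X_n^{\varphi}/n$ converges in distribution to the law with density $\frac{1}{\pi(1-x)\sqrt{1-2x^2}}$ on $(-\sqrt2/2,\sqrt2/2)$, and $E(X_n^{\varphi})/n\to(2-\sqrt2)/2$, $\mathrm{sd}(X_n^{\varphi})/n\to\sqrt{(\sqrt2-1)/2}$. (c) For $\varphi={}^t[e^{i\theta},0]$, $X_n^{\varphi}/n$ converges in distribution to the law with density $\frac{1}{\pi(1+x)\sqrt{1-2x^2}}$ on $(-\sqrt2/2,\sqrt2/2)$, and $\mathrm{sd}(X_n^{\varphi})/n\to\sqrt{(\sqrt2-1)/2}$.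
   Context: Quantum random walk on $\mathbf{Z}$ determined by a $2\times2$ unitary matrix $U=\begin{pmatrix} a & b\\ c & d\end{pmatrix}$: set $P=\begin{pmatrix} a & b\\ 0&0\end{pmatrix}$, $Q=\begin{pmatrix} 0&0\\ c & d\end{pmatrix}$. Given $\varphi={}^t[\alpha,\beta]\in\mathbf{C}^2$ with $|\alpha|^2+|\beta|^2=1$, define $\Psi_0(0)=\varphi$, $\Psi_k(0)=0$ for $k\ne0$, $\Psi_k(n+1)=P\Psi_{k+1}(n)+Q\Psi_{k-1}(n)$; $X_n^{\varphi}$ takes value $k$ with probability $\|\Psi_k(n)\|^2$. $\mathrm{sd}(X)$ denotes the standard deviation of $X$. *)

theory Defs
  imports "HOL-Probability.Probability"
begin

text \<open>Quantum random walk on the integers determined by U = [[a,b],[c,d]].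
  A vector in C^2 is represented as a pair (first, second component).
  P = [[a,b],[0,0]], Q = [[0,0],[c,d]].\<close>

fun qw_Psi :: "complex \<Rightarrow> complex \<Rightarrow> complex \<Rightarrow> complex \<Rightarrow> complex \<times> complex
                 \<Rightarrow> nat \<Rightarrow> int \<Rightarrow> complex \<times> complex" where
  "qw_Psi a b c d \<phi> 0 k = (if k = 0 then \<phi> else (0, 0))"
| "qw_Psi a b c d \<phi> (Suc n) k =
     (let (x1, y1) = qw_Psi a b c d \<phi> n (k + 1);
          (x2, y2) = qw_Psi a b c d \<phi> n (k - 1)
      in (a * x1 + b * y1, c * x2 + d * y2))"

definition qw_prob :: "complex \<Rightarrow> complex \<Rightarrow> complex \<Rightarrow> complex \<Rightarrow> complex \<times> complex
                 \<Rightarrow> nat \<Rightarrow> int \<Rightarrow> real" where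
  "qw_prob a b c d \<phi> n k =
     (cmod (fst (qw_Psi a b c d \<phi> n k)))\<^sup>2 + (cmod (snd (qw_Psi a b c d \<phi> n k)))\<^sup>2"

definition had_prob :: "complex \<times> complex \<Rightarrow> nat \<Rightarrow> int \<Rightarrow> real" where
  "had_prob \<phi> n k = qw_prob (1 / sqrt 2) (1 / sqrt 2) (1 / sqrt 2) (- 1 / sqrt 2) \<phi> n k"

text \<open>X_n is supported in {-n..n}, so its moments are finite sums over this range.\<close>
definition had_E :: "complex \<times> complex \<Rightarrow> nat \<Rightarrow> real" where
  "had_E \<phi> n = (\<Sum>k\<in>{- int n..int n}. real_of_int k * had_prob \<phi> n k)"

definition had_Var :: "complex \<times> complex \<Rightarrow> nat \<Rightarrow> real" where
  "had_Var \<phi> n = (\<Sum>k\<in>{- int n..int n}. (real_of_int k - had_E \<phi> n)\<^sup>2 * had_prob \<phi> n k)"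

definition had_sd :: "complex \<times> complex \<Rightarrow> nat \<Rightarrow> real" where
  "had_sd \<phi> n = sqrt (had_Var \<phi> n)"

definition had_cdf_scaled :: "complex \<times> complex \<Rightarrow> nat \<Rightarrow> real \<Rightarrow> real" where
  "had_cdf_scaled \<phi> n x =
     (\<Sum>k\<in>{k\<in>{- int n..int n}. real_of_int k / real n \<le> x}. had_prob \<phi> n k)"

end

theory Submission
  imports Defs
begin

text \<open>Fourier transformation in the position \<open>k\<close> turns the walk into multiplication by a unitary
  \<open>2 \<times> 2\<close> symbol \<open>U(\<theta>)\<close>: the transformed amplitudes are \<open>U(\<theta>)\<^sup>n \<phi>\<close>. By Parseval, the
  characteristic function of \<open>X\<^sub>n / n\<close> at \<open>\<xi>\<close> is the mean over \<open>\<theta>\<close> of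
  \<open>\<langle>U(\<theta>)\<^sup>n \<phi>, U(\<theta> + \<xi> / n)\<^sup>n \<phi>\<rangle>\<close>. The symbol has the distinct unimodular eigenvalues
  \<open>e\<^bsup>i\<omega>(\<theta>)\<^esup>\<close> and \<open>-e\<^bsup>-i\<omega>(\<theta>)\<^esup>\<close> with orthogonal eigenvectors, so the cross terms vanish as
  \<open>n \<rightarrow> \<infinity>\<close>, while the diagonal terms tend to \<open>e\<^bsup>\<mp>i\<xi> vel(\<theta>)\<^esup>\<close>, where \<open>vel = -\<omega>'\<close> is the group
  velocity \<open>cos \<theta> / sqrt (1 + cos\<^sup>2 \<theta>)\<close>. Dominated convergence and Levy's continuity theorem show
  that \<open>X\<^sub>n / n\<close> converges weakly to \<open>- vel(\<Theta>)\<close> resp. \<open>vel(\<Theta>)\<close>, \<open>\<Theta>\<close> uniform on \<open>[0, 2\<pi>]\<close>, with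
  probabilities the squared norms of the two spectral components of \<open>\<phi>\<close>. As \<open>|X\<^sub>n / n| \<le> 1\<close>, mean
  and variance converge to the corresponding integrals of \<open>vel\<close>. For \<open>\<phi> = (0, e\<^bsup>it\<^esup>)\<close> and
  \<open>(e\<^bsup>it\<^esup>, 0)\<close> these probabilities are \<open>(1 \<mp> vel(\<theta>)) / 2\<close>, and the substitution \<open>x = - vel(\<theta>)\<close>
  yields Konno's density. For the states of part (a) the law of \<open>X\<^sub>n\<close> is invariant under
  \<open>k \<mapsto> -k\<close>, so the mean vanishes.\<close>

section \<open>Vectors in \<open>\<complex>\<^sup>2\<close>\<close>

definition cscale :: "complex \<Rightarrow> complex \<times> complex \<Rightarrow> complex \<times> complex" where
  "cscale c u = (c * fst u, c * snd u)"

definition cinner :: "complex \<times> complex \<Rightarrow> complex \<times> complex \<Rightarrow> complex" where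
  "cinner u w = cnj (fst u) * fst w + cnj (snd u) * snd w"

definition sqnorm :: "complex \<times> complex \<Rightarrow> real" where
  "sqnorm u = (cmod (fst u))\<^sup>2 + (cmod (snd u))\<^sup>2"

lemma sqnorm_Pair [simp]: "sqnorm (a, b) = (cmod a)\<^sup>2 + (cmod b)\<^sup>2"
  by (simp add: sqnorm_def)

lemma sqnorm_nonneg: "sqnorm u \<ge> 0"
  by (simp add: sqnorm_def)

lemma cinner_self: "cinner u u = complex_of_real (sqnorm u)"
  unfolding cinner_def sqnorm_def of_real_add complex_norm_square by (simp add: mult.commute)

lemma cinner_commute: "cinner w u = cnj (cinner u w)"
  by (simp add: cinner_def)

lemma cinner_cscale: "cinner (cscale a u) (cscale b w) = cnj a * b * cinner u w"
  by (simp add: cinner_def cscale_def algebra_simps)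

lemma cinner_add_cscale:
  "cinner (cscale a1 w1 + cscale a2 w2) (cscale b1 z1 + cscale b2 z2) =
     cnj a1 * b1 * cinner w1 z1 + cnj a1 * b2 * cinner w1 z2
   + cnj a2 * b1 * cinner w2 z1 + cnj a2 * b2 * cinner w2 z2"
  by (simp add: cinner_def cscale_def algebra_simps)

lemma sqnorm_cscale: "sqnorm (cscale c u) = (cmod c)\<^sup>2 * sqnorm u"
  by (simp add: sqnorm_def cscale_def norm_mult power_mult_distrib algebra_simps)

lemma sqnorm_add_orthogonal:
  assumes "cinner u w = 0"
  shows "sqnorm (u + w) = sqnorm u + sqnorm w"
proof -
  have "complex_of_real (sqnorm (u + w)) = cinner u u + cinner w w + cinner u w + cnj (cinner u w)"
    unfolding cinner_self[symmetric] by (simp add: cinner_def algebra_simps)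
  then show ?thesis
    using assms by (simp add: cinner_self flip: of_real_add)
qed

lemma norm_cinner_le: "cmod (cinner u w) \<le> (sqnorm u + sqnorm w) / 2"
proof -
  have amgm: "cmod (cnj a * b) \<le> ((cmod a)\<^sup>2 + (cmod b)\<^sup>2) / 2" for a b :: complex
  proof -
    have "0 \<le> (cmod a - cmod b)\<^sup>2" by simp
    then show ?thesis by (simp add: norm_mult power2_eq_square algebra_simps)
  qed
  have "cmod (cinner u w) \<le> cmod (cnj (fst u) * fst w) + cmod (cnj (snd u) * snd w)"
    unfolding cinner_def by (rule norm_triangle_ineq)
  also have "\<dots> \<le> (sqnorm u + sqnorm w) / 2"
    using amgm[of "fst u" "fst w"] amgm[of "snd u" "snd w"] by (simp add: sqnorm_def)
  finally show ?thesis .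
qed

lemma cinner_eigenvectors_orthogonal:
  assumes unitary: "\<And>u w. cinner (U u) (U w) = cinner u w"
    and eig: "U v1 = cscale \<mu> v1" "U v2 = cscale \<nu> v2"
    and "cmod \<mu> = 1" and "\<mu> \<noteq> \<nu>"
  shows "cinner v1 v2 = 0"
proof (rule ccontr)
  assume nz: "cinner v1 v2 \<noteq> 0"
  have "cinner v1 v2 = cnj \<mu> * \<nu> * cinner v1 v2"
    using unitary[of v1 v2] unfolding eig cinner_cscale by simp
  with nz have "cnj \<mu> * \<nu> = 1" by simp
  then have "\<mu> * cnj \<mu> * \<nu> = \<mu>" by (simp add: mult.assoc)
  moreover have "\<mu> * cnj \<mu> = 1"
    using \<open>cmod \<mu> = 1\<close> by (simp add: complex_norm_square[symmetric])
  ultimately show False using \<open>\<mu> \<noteq> \<nu>\<close> by simp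
qed

section \<open>Amplitudes of the Hadamard walk and their Fourier transform\<close>

definition had_entry :: complex where
  "had_entry = complex_of_real (1 / sqrt 2)"

definition had_amp :: "complex \<times> complex \<Rightarrow> nat \<Rightarrow> int \<Rightarrow> complex \<times> complex" where
  "had_amp \<phi> n k = qw_Psi had_entry had_entry had_entry (complex_of_real (- 1 / sqrt 2)) \<phi> n k"

lemma had_entry_sq: "had_entry * had_entry = 1 / 2"
  unfolding had_entry_def by (simp flip: of_real_mult)

lemma cnj_had_entry [simp]: "cnj had_entry = had_entry"
  by (simp add: had_entry_def)

lemma norm_had_entry: "cmod had_entry = 1 / sqrt 2"
  unfolding had_entry_def norm_of_real by simp

lemma had_amp_0: "had_amp \<phi> 0 k = (if k = 0 then \<phi> else (0, 0))"
  by (simp add: had_amp_def)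

lemma had_amp_Suc:
  "had_amp \<phi> (Suc n) k =
     (had_entry * (fst (had_amp \<phi> n (k + 1)) + snd (had_amp \<phi> n (k + 1))),
      had_entry * (fst (had_amp \<phi> n (k - 1)) - snd (had_amp \<phi> n (k - 1))))"
proof -
  have "complex_of_real (- 1 / sqrt 2) = - had_entry" by (simp add: had_entry_def)
  then show ?thesis
    by (simp add: had_amp_def split_beta Let_def algebra_simps)
qed

lemma had_amp_outside: "int n < \<bar>k\<bar> \<Longrightarrow> had_amp \<phi> n k = (0, 0)"
proof (induction n arbitrary: k)
  case 0
  then show ?case by (simp add: had_amp_0)
next
  case (Suc n)
  then have "int n < \<bar>k + 1\<bar>" "int n < \<bar>k - 1\<bar>" by auto
  with Suc.IH show ?case by (simp add: had_amp_Suc)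
qed

lemma had_prob_eq_sqnorm: "had_prob \<phi> n k = sqnorm (had_amp \<phi> n k)"
  by (simp add: had_prob_def qw_prob_def sqnorm_def had_amp_def had_entry_def)

lemma had_prob_nonneg: "had_prob \<phi> n k \<ge> 0"
  by (simp add: had_prob_eq_sqnorm sqnorm_nonneg)

lemma had_prob_outside: "k \<notin> {- int n..int n} \<Longrightarrow> had_prob \<phi> n k = 0"
  by (subst had_prob_eq_sqnorm, subst had_amp_outside) auto

definition fourier2 :: "int set \<Rightarrow> (int \<Rightarrow> complex \<times> complex) \<Rightarrow> real \<Rightarrow> complex \<times> complex" where
  "fourier2 S f \<theta> = ((\<Sum>k\<in>S. fst (f k) * iexp (of_int k * \<theta>)), (\<Sum>k\<in>S. snd (f k) * iexp (of_int k * \<theta>)))"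

lemma fourier2_mono_neutral:
  assumes "finite A" "S \<subseteq> A" "\<And>k. k \<in> A - S \<Longrightarrow> f k = (0, 0)"
  shows "fourier2 S f \<theta> = fourier2 A f \<theta>"
  unfolding fourier2_def
  by (intro prod_eqI; simp; rule sum.mono_neutral_left) (use assms in auto)

lemma continuous_on_fourier2 [continuous_intros]:
  "continuous_on T (\<lambda>\<theta>. fst (fourier2 S f \<theta>))"
  "continuous_on T (\<lambda>\<theta>. snd (fourier2 S f \<theta>))"
  unfolding fourier2_def fst_conv snd_conv by (intro continuous_intros)+

lemma iexp_int_periodic: "iexp (of_int m * (a + 2 * pi)) = iexp (of_int m * a)"
proof -
  have "iexp (of_int m * (a + 2 * pi)) = iexp (of_int m * a) * exp (complex_of_real (2 * of_int m * pi) * \<i>)"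
    by (simp add: algebra_simps flip: exp_add)
  also have "\<dots> = iexp (of_int m * a)" by (subst exp_integer_2pi) auto
  finally show ?thesis .
qed

lemma has_integral_iexp_int:
  "((\<lambda>\<theta>. iexp (of_int m * \<theta>)) has_integral (if m = 0 then 2 * pi else 0)) {a..a + 2 * pi}"
proof (cases "m = 0")
  case True
  then show ?thesis using has_integral_const_real[of "1::complex" a "a + 2 * pi"]
    by (simp add: scaleR_conv_of_real)
next
  case False
  let ?F = "\<lambda>\<theta>. iexp (of_int m * \<theta>) / (\<i> * of_int m)"
  have "(?F has_vector_derivative iexp (of_int m * \<theta>)) (at \<theta> within {a..a + 2 * pi})" for \<theta>
  proof -
    have "((\<lambda>z. exp (\<i> * of_int m * z) / (\<i> * of_int m)) has_field_derivative
            exp (\<i> * of_int m * of_real \<theta>)) (at (of_real \<theta>))"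
      using False by (auto intro!: derivative_eq_intros)
    from has_vector_derivative_real_field[OF this] show ?thesis
      by (simp add: mult.assoc has_vector_derivative_at_within)
  qed
  then have "((\<lambda>\<theta>. iexp (of_int m * \<theta>)) has_integral (?F (a + 2 * pi) - ?F a)) {a..a + 2 * pi}"
    by (intro fundamental_theorem_of_calculus) auto
  then show ?thesis using False by (simp only: iexp_int_periodic) simp
qed

lemma fourier2_parseval:
  assumes "finite S"
  shows "(2 * pi) * (\<Sum>k\<in>S. complex_of_real (sqnorm (f k)) * iexp (of_int k * h)) =
         integral {a..a + 2 * pi} (\<lambda>\<theta>. cinner (fourier2 S f \<theta>) (fourier2 S f (\<theta> + h)))"
proof -
  define c where "c k m = cinner (f k) (f m) * iexp (of_int m * h)" for k m
  have expand: "cinner (fourier2 S f \<theta>) (fourier2 S f (\<theta> + h)) =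
      (\<Sum>k\<in>S. \<Sum>m\<in>S. c k m * iexp (of_int (m - k) * \<theta>))" for \<theta>
  proof -
    have "cnj (iexp (of_int k * \<theta>)) * iexp (of_int m * (\<theta> + h)) =
        iexp (of_int m * h) * iexp (of_int (m - k) * \<theta>)" for k m
      by (simp add: exp_cnj algebra_simps flip: exp_add)
    then show ?thesis
      unfolding cinner_def fourier2_def c_def fst_conv snd_conv cnj_sum sum_product
        sum.distrib[symmetric]
      by (intro sum.cong refl) (simp add: algebra_simps)
  qed
  have "((\<lambda>\<theta>. \<Sum>k\<in>S. \<Sum>m\<in>S. c k m * iexp (of_int (m - k) * \<theta>)) has_integral
          (\<Sum>k\<in>S. \<Sum>m\<in>S. c k m * (if m - k = 0 then 2 * pi else 0))) {a..a + 2 * pi}"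
    by (intro has_integral_sum assms has_integral_mult_right has_integral_iexp_int)
  also have "(\<Sum>k\<in>S. \<Sum>m\<in>S. c k m * (if m - k = 0 then 2 * pi else 0)) = (\<Sum>k\<in>S. c k k * (2 * pi))"
    using assms by (intro sum.cong refl) (simp add: if_distrib sum.delta cong: if_cong)
  also have "\<dots> = (2 * pi) * (\<Sum>k\<in>S. complex_of_real (sqnorm (f k)) * iexp (of_int k * h))"
    by (simp add: c_def cinner_self sum_distrib_left mult_ac)
  finally show ?thesis
    unfolding expand[symmetric] by (simp add: integral_unique)
qed

definition had_fourier :: "complex \<times> complex \<Rightarrow> nat \<Rightarrow> real \<Rightarrow> complex \<times> complex" where
  "had_fourier \<phi> n = fourier2 {- int n..int n} (had_amp \<phi> n)"

definition had_symbol :: "real \<Rightarrow> complex \<times> complex \<Rightarrow> complex \<times> complex" where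
  "had_symbol \<theta> u = (iexp (- \<theta>) * had_entry * (fst u + snd u), iexp \<theta> * had_entry * (fst u - snd u))"

lemma had_fourier_0: "had_fourier \<phi> 0 \<theta> = \<phi>"
  by (simp add: had_fourier_def fourier2_def had_amp_0)

lemma sum_int_shift:
  "(\<Sum>k\<in>{a..b::int}. f (k + d)) = (\<Sum>m\<in>{a + d..b + d}. f m)"
  by (rule sum.reindex_bij_witness[of _ "\<lambda>m. m - d" "\<lambda>k. k + d"]) auto

lemma had_fourier_Suc: "had_fourier \<phi> (Suc n) \<theta> = had_symbol \<theta> (had_fourier \<phi> n \<theta>)"
proof -
  let ?f = "\<lambda>k. fst (had_amp \<phi> n k)" and ?g = "\<lambda>k. snd (had_amp \<phi> n k)"
  let ?e = "\<lambda>k. iexp (of_int k * \<theta>)"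
  have shift: "iexp (of_int (m + d) * \<theta>) = iexp (of_int d * \<theta>) * ?e m" for m d :: int
    by (simp add: algebra_simps flip: exp_add)
  have wide: "had_fourier \<phi> n \<theta> = fourier2 {- int n + d..int n + d'} (had_amp \<phi> n) \<theta>"
    if "d \<le> 0" "d' \<ge> 0" for d d'
    unfolding had_fourier_def using that
    by (intro fourier2_mono_neutral had_amp_outside) auto
  have bounds: "{- int (Suc n)..int (Suc n)} = {- int n - 1..int n + 1}" by simp
  have "fst (had_fourier \<phi> (Suc n) \<theta>) =
      (\<Sum>k\<in>{- int n - 1..int n + 1}. had_entry * (?f (k + 1) + ?g (k + 1)) * iexp (of_int (k + 1 + - 1) * \<theta>))"
    unfolding had_fourier_def fourier2_def had_amp_Suc bounds fst_conv snd_conv by simp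
  also have "\<dots> = (\<Sum>m\<in>{- int n..int n + 2}. had_entry * (?f m + ?g m) * iexp (of_int (m + - 1) * \<theta>))"
    by (subst sum_int_shift[where f = "\<lambda>m. had_entry * (?f m + ?g m) * iexp (of_int (m + - 1) * \<theta>)"]) (simp add: algebra_simps)
  also have "\<dots> = fst (had_symbol \<theta> (had_fourier \<phi> n \<theta>))"
    unfolding wide[of 0 2, simplified] shift
    by (simp add: had_symbol_def fourier2_def sum_distrib_left sum.distrib algebra_simps)
  finally have fst_eq: "fst (had_fourier \<phi> (Suc n) \<theta>) = fst (had_symbol \<theta> (had_fourier \<phi> n \<theta>))" .
  have "snd (had_fourier \<phi> (Suc n) \<theta>) =
      (\<Sum>k\<in>{- int n - 1..int n + 1}. had_entry * (?f (k + - 1) - ?g (k + - 1)) * iexp (of_int (k + - 1 + 1) * \<theta>))"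
    unfolding had_fourier_def fourier2_def had_amp_Suc bounds fst_conv snd_conv by simp
  also have "\<dots> = (\<Sum>m\<in>{- int n - 2..int n}. had_entry * (?f m - ?g m) * iexp (of_int (m + 1) * \<theta>))"
    by (subst sum_int_shift[where f = "\<lambda>m. had_entry * (?f m - ?g m) * iexp (of_int (m + 1) * \<theta>)"]) (simp add: algebra_simps)
  also have "\<dots> = snd (had_symbol \<theta> (had_fourier \<phi> n \<theta>))"
    unfolding wide[of "- 2" 0, simplified] shift
    by (simp add: had_symbol_def fourier2_def sum_distrib_left sum_subtractf algebra_simps)
  finally have snd_eq: "snd (had_fourier \<phi> (Suc n) \<theta>) = snd (had_symbol \<theta> (had_fourier \<phi> n \<theta>))" .
  show ?thesis using fst_eq snd_eq by (simp add: prod_eq_iff)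
qed

lemma cinner_had_symbol: "cinner (had_symbol \<theta> u) (had_symbol \<theta> w) = cinner u w"
proof -
  have unit: "cnj (iexp t) * iexp t = 1" for t
    by (simp add: exp_cnj flip: exp_add)
  have "cinner (had_symbol \<theta> u) (had_symbol \<theta> w) =
     (cnj (iexp (- \<theta>)) * iexp (- \<theta>)) * (had_entry * had_entry) * (cnj (fst u + snd u) * (fst w + snd w))
   + (cnj (iexp \<theta>) * iexp \<theta>) * (had_entry * had_entry) * (cnj (fst u - snd u) * (fst w - snd w))"
    by (simp add: cinner_def had_symbol_def algebra_simps)
  also have "\<dots> = cinner u w"
    unfolding unit had_entry_sq by (simp add: cinner_def algebra_simps)
  finally show ?thesis .
qed

lemma sqnorm_had_fourier: "sqnorm (had_fourier \<phi> n \<theta>) = sqnorm \<phi>"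
proof -
  have "cinner (had_fourier \<phi> n \<theta>) (had_fourier \<phi> n \<theta>) = cinner \<phi> \<phi>"
    by (induction n) (simp_all add: had_fourier_0 had_fourier_Suc cinner_had_symbol)
  then show ?thesis by (simp add: cinner_self)
qed

lemma had_char_fourier:
  "(2 * pi) * (\<Sum>k\<in>{- int n..int n}. complex_of_real (had_prob \<phi> n k) * iexp (of_int k * h)) =
     integral {a..a + 2 * pi} (\<lambda>\<theta>. cinner (had_fourier \<phi> n \<theta>) (had_fourier \<phi> n (\<theta> + h)))"
  unfolding had_prob_eq_sqnorm had_fourier_def by (rule fourier2_parseval) simp

lemma sum_had_prob: "(\<Sum>k\<in>{- int n..int n}. had_prob \<phi> n k) = sqnorm \<phi>"
proof -
  have "complex_of_real (2 * pi * (\<Sum>k\<in>{- int n..int n}. had_prob \<phi> n k)) =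
        integral {0..0 + 2 * pi} (\<lambda>\<theta>. cinner (had_fourier \<phi> n \<theta>) (had_fourier \<phi> n (\<theta> + 0)))"
    unfolding had_char_fourier[symmetric] by simp
  also have "\<dots> = complex_of_real (2 * pi * sqnorm \<phi>)"
    by (simp add: cinner_self sqnorm_had_fourier scaleR_conv_of_real)
  finally have "2 * pi * (\<Sum>k\<in>{- int n..int n}. had_prob \<phi> n k) = 2 * pi * sqnorm \<phi>"
    by (simp only: of_real_eq_iff)
  then show ?thesis by simp
qed

section \<open>Spectral decomposition of the Hadamard symbol\<close>

text \<open>The symbol has trace \<open>-\<i> sqrt 2 sin \<theta>\<close> and determinant \<open>-1\<close>, so its eigenvalues are
  \<open>e\<^bsup>i \<omega>\<^esup>\<close> and \<open>-e\<^bsup>-i \<omega>\<^esup>\<close> with \<open>sin \<omega> = - sin \<theta> / sqrt 2\<close>. The phase \<open>\<omega>\<close> has derivative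
  \<open>- vel \<theta>\<close>; \<open>vel\<close> is the group velocity that becomes the limit of \<open>X\<^sub>n / n\<close>.\<close>

definition rho :: "real \<Rightarrow> real" where
  "rho \<theta> = sqrt (1 + (cos \<theta>)\<^sup>2)"

definition omega :: "real \<Rightarrow> real" where
  "omega \<theta> = - arcsin (sin \<theta> / sqrt 2)"

definition vel :: "real \<Rightarrow> real" where
  "vel \<theta> = cos \<theta> / rho \<theta>"

definition eig1 :: "real \<Rightarrow> complex" where
  "eig1 \<theta> = iexp (omega \<theta>)"

definition eig2 :: "real \<Rightarrow> complex" where
  "eig2 \<theta> = - iexp (- omega \<theta>)"

lemma rho_pos: "rho \<theta> > 0"
  by (simp add: rho_def add_pos_nonneg)

lemma rho_sq: "(rho \<theta>)\<^sup>2 = 1 + (cos \<theta>)\<^sup>2"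
  by (simp add: rho_def add_nonneg_nonneg)

lemma abs_cos_le_rho: "\<bar>cos \<theta>\<bar> \<le> rho \<theta>"
  unfolding rho_def by (rule real_le_rsqrt) simp

lemma continuous_on_rho [continuous_intros]: "continuous_on S rho"
  unfolding rho_def by (intro continuous_intros)

lemma continuous_on_vel [continuous_intros]: "continuous_on S vel"
  unfolding vel_def using rho_pos by (intro continuous_intros) (auto simp: less_imp_neq[symmetric])

lemma abs_vel_le: "\<bar>vel \<theta>\<bar> \<le> 1"
  using abs_cos_le_rho[of \<theta>] rho_pos[of \<theta>] by (simp add: vel_def abs_div)

lemma iexp_eq_cos_sin: "iexp x = complex_of_real (cos x) + \<i> * complex_of_real (sin x)"
  by (simp add: cis_conv_exp[symmetric] complex_eq_iff)

lemma iexp_minus_eq_cos_sin: "exp (- (\<i> * complex_of_real x)) = complex_of_real (cos x) - \<i> * complex_of_real (sin x)"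
  using iexp_eq_cos_sin[of "- x"] by simp

lemma sin_div_sqrt2_bounds: "- 1 < sin \<theta> / sqrt 2" "sin \<theta> / sqrt 2 < 1"
proof -
  have "\<bar>sin \<theta>\<bar> \<le> 1" "1 < sqrt 2" by simp_all
  then have "\<bar>sin \<theta>\<bar> < sqrt 2" by linarith
  then have "\<bar>sin \<theta> / sqrt 2\<bar> < 1" by (simp add: abs_div divide_less_eq)
  then show "- 1 < sin \<theta> / sqrt 2" "sin \<theta> / sqrt 2 < 1"
    using abs_less_iff by linarith+
qed

lemma sqrt_one_minus_sin_sq_half: "sqrt (1 - (sin \<theta> / sqrt 2)\<^sup>2) = rho \<theta> / sqrt 2"
proof -
  have "1 - (sin \<theta> / sqrt 2)\<^sup>2 = (1 + (cos \<theta>)\<^sup>2) / 2"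
    by (simp add: power_divide) (smt (verit) sin_cos_squared_add)
  then have "sqrt (1 - (sin \<theta> / sqrt 2)\<^sup>2) = sqrt ((1 + (cos \<theta>)\<^sup>2) / 2)" by (simp only:)
  also have "\<dots> = rho \<theta> / sqrt 2" by (simp add: rho_def real_sqrt_divide)
  finally show ?thesis .
qed

lemma sin_omega: "sin (omega \<theta>) = - sin \<theta> / sqrt 2"
  using sin_div_sqrt2_bounds[of \<theta>] by (simp add: omega_def sin_arcsin)

lemma cos_omega: "cos (omega \<theta>) = rho \<theta> / sqrt 2"
  using sin_div_sqrt2_bounds[of \<theta>] by (simp add: omega_def cos_arcsin sqrt_one_minus_sin_sq_half)

lemma has_real_derivative_omega: "(omega has_real_derivative - vel \<theta>) (at \<theta>)"
proof -
  have "((\<lambda>\<theta>. arcsin (sin \<theta> / sqrt 2)) has_real_derivative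
      inverse (sqrt (1 - (sin \<theta> / sqrt 2)\<^sup>2)) * (cos \<theta> / sqrt 2)) (at \<theta>)"
    using sin_div_sqrt2_bounds[of \<theta>]
    by (intro DERIV_chain2[OF DERIV_arcsin] DERIV_cdivide DERIV_sin) auto
  also have "inverse (sqrt (1 - (sin \<theta> / sqrt 2)\<^sup>2)) * (cos \<theta> / sqrt 2) = vel \<theta>"
    unfolding sqrt_one_minus_sin_sq_half vel_def using rho_pos[of \<theta>] by (simp add: field_simps)
  finally show ?thesis
    unfolding omega_def[abs_def] by (rule DERIV_minus)
qed

lemma continuous_on_omega [continuous_intros]: "continuous_on S omega"
  by (intro continuous_at_imp_continuous_on ballI DERIV_isCont[OF has_real_derivative_omega])

lemma eig1_minus_eig2: "eig1 \<theta> - eig2 \<theta> = complex_of_real (sqrt 2 * rho \<theta>)"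
proof -
  have "eig1 \<theta> - eig2 \<theta> = complex_of_real (2 * cos (omega \<theta>))"
    by (simp add: eig1_def eig2_def iexp_eq_cos_sin iexp_minus_eq_cos_sin)
  also have "2 * cos (omega \<theta>) = sqrt 2 * rho \<theta>"
    unfolding cos_omega by (simp add: real_div_sqrt field_simps)
  finally show ?thesis .
qed

lemma eig1_neq_eig2: "eig1 \<theta> \<noteq> eig2 \<theta>"
  using eig1_minus_eig2[of \<theta>] rho_pos[of \<theta>] by auto

lemma eig1_mult_eig2: "eig1 \<theta> * eig2 \<theta> = - 1"
  by (simp add: eig1_def eig2_def flip: exp_add)

lemma eig1_plus_eig2: "eig1 \<theta> + eig2 \<theta> = had_entry * (iexp (- \<theta>) - iexp \<theta>)"
proof -
  have "eig1 \<theta> + eig2 \<theta> = complex_of_real (2 * sin (omega \<theta>)) * \<i>"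
    by (simp add: eig1_def eig2_def iexp_eq_cos_sin iexp_minus_eq_cos_sin)
  also have "2 * sin (omega \<theta>) = - (2 / sqrt 2) * sin \<theta>"
    unfolding sin_omega by simp
  also have "complex_of_real (- (2 / sqrt 2) * sin \<theta>) * \<i> = had_entry * (iexp (- \<theta>) - iexp \<theta>)"
    by (simp add: had_entry_def iexp_eq_cos_sin iexp_minus_eq_cos_sin complex_eq_iff)
  finally show ?thesis .
qed

lemma norm_eig1 [simp]: "cmod (eig1 \<theta>) = 1"
  by (simp add: eig1_def)

lemma norm_eig2 [simp]: "cmod (eig2 \<theta>) = 1"
  by (simp add: eig2_def)

lemma had_symbol_add: "had_symbol \<theta> (u + w) = had_symbol \<theta> u + had_symbol \<theta> w"
  by (simp add: had_symbol_def algebra_simps)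

lemma had_symbol_diff: "had_symbol \<theta> (u - w) = had_symbol \<theta> u - had_symbol \<theta> w"
  by (simp add: had_symbol_def algebra_simps)

lemma had_symbol_cscale: "had_symbol \<theta> (cscale c u) = cscale c (had_symbol \<theta> u)"
  by (simp add: had_symbol_def cscale_def algebra_simps)

text \<open>Cayley-Hamilton for the symbol, whose trace is \<open>eig1 + eig2\<close> and determinant \<open>eig1 * eig2\<close>.\<close>

lemma had_symbol_twice:
  "had_symbol \<theta> (had_symbol \<theta> u) = cscale (eig1 \<theta> + eig2 \<theta>) (had_symbol \<theta> u) + u"
proof -
  have e: "iexp (- \<theta>) * iexp \<theta> = 1" by (simp flip: exp_add)
  show ?thesis
    unfolding eig1_plus_eig2 had_symbol_def cscale_def prod_eq_iff fst_add snd_add fst_conv snd_conv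
    using e had_entry_sq by algebra
qed

definition proj1 :: "complex \<times> complex \<Rightarrow> real \<Rightarrow> complex \<times> complex" where
  "proj1 u \<theta> = cscale (1 / (eig1 \<theta> - eig2 \<theta>)) (had_symbol \<theta> u - cscale (eig2 \<theta>) u)"

definition proj2 :: "complex \<times> complex \<Rightarrow> real \<Rightarrow> complex \<times> complex" where
  "proj2 u \<theta> = u - proj1 u \<theta>"

lemma proj1_add_proj2: "proj1 u \<theta> + proj2 u \<theta> = u"
  by (simp add: proj2_def)

lemma had_symbol_proj1: "had_symbol \<theta> (proj1 u \<theta>) = cscale (eig1 \<theta>) (proj1 u \<theta>)"
proof -
  have "had_symbol \<theta> (had_symbol \<theta> u) - cscale (eig2 \<theta>) (had_symbol \<theta> u) =
      cscale (eig1 \<theta>) (had_symbol \<theta> u - cscale (eig2 \<theta>) u)"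
    unfolding had_symbol_twice cscale_def prod_eq_iff fst_add snd_add fst_diff snd_diff fst_conv snd_conv
    using eig1_mult_eig2[of \<theta>] by algebra
  then show ?thesis
    unfolding proj1_def had_symbol_cscale had_symbol_diff by (simp add: cscale_def algebra_simps)
qed

lemma had_symbol_proj2: "had_symbol \<theta> (proj2 u \<theta>) = cscale (eig2 \<theta>) (proj2 u \<theta>)"
proof -
  have "eig1 \<theta> - eig2 \<theta> \<noteq> 0" using eig1_neq_eig2[of \<theta>] by simp
  then show ?thesis
    unfolding proj2_def had_symbol_diff had_symbol_proj1
    by (simp add: proj1_def cscale_def prod_eq_iff field_simps)
qed

lemma cinner_proj1_proj2: "cinner (proj1 u \<theta>) (proj2 u \<theta>) = 0"
  by (rule cinner_eigenvectors_orthogonal[OF cinner_had_symbol had_symbol_proj1 had_symbol_proj2])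
     (simp_all add: eig1_neq_eig2)

lemma sqnorm_proj1_add_proj2: "sqnorm (proj1 u \<theta>) + sqnorm (proj2 u \<theta>) = sqnorm u"
  using sqnorm_add_orthogonal[OF cinner_proj1_proj2] by (simp add: proj1_add_proj2)

lemma had_fourier_eq_eigen:
  "had_fourier \<phi> n \<theta> = cscale (eig1 \<theta> ^ n) (proj1 \<phi> \<theta>) + cscale (eig2 \<theta> ^ n) (proj2 \<phi> \<theta>)"
proof (induction n)
  case 0
  show ?case using proj1_add_proj2[of \<phi> \<theta>] by (simp add: had_fourier_0 cscale_def)
next
  case (Suc n)
  show ?case
    unfolding had_fourier_Suc Suc had_symbol_add had_symbol_cscale had_symbol_proj1 had_symbol_proj2
    by (simp add: cscale_def algebra_simps)
qed

lemma continuous_on_proj [continuous_intros]: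
  "continuous_on S (\<lambda>\<theta>. fst (proj1 u \<theta>))" "continuous_on S (\<lambda>\<theta>. snd (proj1 u \<theta>))"
  "continuous_on S (\<lambda>\<theta>. fst (proj2 u \<theta>))" "continuous_on S (\<lambda>\<theta>. snd (proj2 u \<theta>))"
proof -
  have inv: "continuous_on S (\<lambda>\<theta>. 1 / (eig1 \<theta> - eig2 \<theta>))"
    unfolding eig1_minus_eig2 using rho_pos by (intro continuous_intros) (auto simp: less_imp_neq[symmetric])
  have eig: "continuous_on S eig2"
    unfolding eig2_def by (intro continuous_intros)
  show p1: "continuous_on S (\<lambda>\<theta>. fst (proj1 u \<theta>))" "continuous_on S (\<lambda>\<theta>. snd (proj1 u \<theta>))"
    unfolding proj1_def cscale_def had_symbol_def fst_conv snd_conv fst_diff snd_diff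
    by (intro continuous_intros inv eig)+
  show "continuous_on S (\<lambda>\<theta>. fst (proj2 u \<theta>))" "continuous_on S (\<lambda>\<theta>. snd (proj2 u \<theta>))"
    unfolding proj2_def fst_diff snd_diff using p1 by (auto intro!: continuous_on_diff)
qed

lemma continuous_on_sqnorm_proj [continuous_intros]:
  "continuous_on S (\<lambda>\<theta>. sqnorm (proj1 u \<theta>))" "continuous_on S (\<lambda>\<theta>. sqnorm (proj2 u \<theta>))"
  unfolding sqnorm_def by (intro continuous_intros)+

section \<open>Convergence of the characteristic functions\<close>

lemma tendsto_scaled_increment:
  assumes "(f has_real_derivative D) (at x)"
  shows "(\<lambda>n. real n * (f (x + \<xi> / real n) - f x)) \<longlonglongrightarrow> \<xi> * D"
proof (cases "\<xi> = 0")
  case True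
  then show ?thesis by simp
next
  case False
  have diff_quot: "((\<lambda>h. (f (x + h) - f x) / h) \<longlongrightarrow> D) (at 0)"
    using assms unfolding DERIV_def .
  have step: "filterlim (\<lambda>n. \<xi> / real n) (at 0) sequentially"
    unfolding filterlim_at
  proof
    show "\<forall>\<^sub>F n in sequentially. \<xi> / real n \<in> UNIV \<and> \<xi> / real n \<noteq> 0"
      using eventually_gt_at_top[of "0::nat"] by eventually_elim (use False in simp)
  qed (rule lim_const_over_n)
  have "(\<lambda>n. \<xi> * ((f (x + \<xi> / real n) - f x) / (\<xi> / real n))) \<longlonglongrightarrow> \<xi> * D"
    using filterlim_compose[OF diff_quot step] by (intro tendsto_intros)
  then show ?thesis
  proof (rule Lim_transform_eventually)
    show "\<forall>\<^sub>F n in sequentially. \<xi> * ((f (x + \<xi> / real n) - f x) / (\<xi> / real n)) =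
        real n * (f (x + \<xi> / real n) - f x)"
      using eventually_gt_at_top[of "0::nat"] by eventually_elim (use False in simp)
  qed
qed

lemma cnj_eig1_pow_mult:
  "cnj (eig1 \<theta>) ^ n * eig1 \<theta>' ^ n = iexp (real n * (omega \<theta>' - omega \<theta>))"
proof -
  have "cnj (eig1 \<theta>) * eig1 \<theta>' = iexp (omega \<theta>' - omega \<theta>)"
    by (simp add: eig1_def exp_cnj algebra_simps flip: exp_add)
  then show ?thesis
    by (simp add: algebra_simps flip: power_mult_distrib exp_of_nat_mult)
qed

lemma cnj_eig2_pow_mult:
  "cnj (eig2 \<theta>) ^ n * eig2 \<theta>' ^ n = iexp (- (real n * (omega \<theta>' - omega \<theta>)))"
proof -
  have "cnj (eig2 \<theta>) * eig2 \<theta>' = iexp (- (omega \<theta>' - omega \<theta>))"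
    by (simp add: eig2_def exp_cnj algebra_simps flip: exp_add)
  then show ?thesis
    by (simp add: algebra_simps flip: power_mult_distrib exp_of_nat_mult)
qed

lemma cinner_had_fourier_eigen:
  "cinner (had_fourier \<phi> n \<theta>) (had_fourier \<phi> n \<theta>') =
      iexp (real n * (omega \<theta>' - omega \<theta>)) * cinner (proj1 \<phi> \<theta>) (proj1 \<phi> \<theta>')
    + cnj (eig1 \<theta>) ^ n * eig2 \<theta>' ^ n * cinner (proj1 \<phi> \<theta>) (proj2 \<phi> \<theta>')
    + cnj (eig2 \<theta>) ^ n * eig1 \<theta>' ^ n * cinner (proj2 \<phi> \<theta>) (proj1 \<phi> \<theta>')
    + iexp (- (real n * (omega \<theta>' - omega \<theta>))) * cinner (proj2 \<phi> \<theta>) (proj2 \<phi> \<theta>')"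
  unfolding had_fourier_eq_eigen cinner_add_cscale complex_cnj_power
    cnj_eig1_pow_mult cnj_eig2_pow_mult ..

lemma tendsto_cinner_shift:
  fixes w :: "'a::t2_space \<Rightarrow> complex \<times> complex"
  assumes "continuous_on UNIV (\<lambda>\<theta>. fst (w \<theta>))" "continuous_on UNIV (\<lambda>\<theta>. snd (w \<theta>))"
    and "t \<longlonglongrightarrow> \<theta>"
  shows "(\<lambda>n. cinner z (w (t n))) \<longlonglongrightarrow> cinner z (w \<theta>)"
proof -
  have lim: "(\<lambda>n. fst (w (t n))) \<longlonglongrightarrow> fst (w \<theta>)" "(\<lambda>n. snd (w (t n))) \<longlonglongrightarrow> snd (w \<theta>)"
    using assms by (auto intro: isCont_tendsto_compose simp: continuous_on_eq_continuous_at)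
  show ?thesis
    unfolding cinner_def by (intro tendsto_add tendsto_mult tendsto_const lim)
qed

definition char_limit_integrand :: "complex \<times> complex \<Rightarrow> real \<Rightarrow> real \<Rightarrow> complex" where
  "char_limit_integrand \<phi> \<xi> \<theta> =
     complex_of_real (sqnorm (proj1 \<phi> \<theta>)) * iexp (- \<xi> * vel \<theta>)
   + complex_of_real (sqnorm (proj2 \<phi> \<theta>)) * iexp (\<xi> * vel \<theta>)"

lemma tendsto_zero_mult_unimodular:
  fixes f g :: "nat \<Rightarrow> complex"
  assumes "f \<longlonglongrightarrow> 0" and "\<And>n. cmod (g n) = 1"
  shows "(\<lambda>n. g n * f n) \<longlonglongrightarrow> 0"
proof (rule tendsto_norm_zero_cancel)
  show "(\<lambda>n. norm (g n * f n)) \<longlonglongrightarrow> 0"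
    using tendsto_norm_zero[OF assms(1)] by (simp add: norm_mult assms(2))
qed

lemma tendsto_cinner_had_fourier:
  "(\<lambda>n. cinner (had_fourier \<phi> n \<theta>) (had_fourier \<phi> n (\<theta> + \<xi> / real n)))
     \<longlonglongrightarrow> char_limit_integrand \<phi> \<xi> \<theta>"
proof -
  let ?t = "\<lambda>n::nat. \<theta> + \<xi> / real n"
  have t: "?t \<longlonglongrightarrow> \<theta>"
    using tendsto_add[OF tendsto_const lim_const_over_n[of \<xi>]] by simp
  note lim1 = tendsto_cinner_shift[OF continuous_on_proj(1,2) t]
    and lim2 = tendsto_cinner_shift[OF continuous_on_proj(3,4) t]
  have phase: "(\<lambda>n. real n * (omega (?t n) - omega \<theta>)) \<longlonglongrightarrow> \<xi> * - vel \<theta>"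
    by (rule tendsto_scaled_increment[OF has_real_derivative_omega])
  have diag1: "(\<lambda>n. iexp (real n * (omega (?t n) - omega \<theta>))) \<longlonglongrightarrow> iexp (\<xi> * - vel \<theta>)"
    using isCont_tendsto_compose[OF isCont_iexp phase] .
  have diag2: "(\<lambda>n. iexp (- (real n * (omega (?t n) - omega \<theta>)))) \<longlonglongrightarrow> iexp (- (\<xi> * - vel \<theta>))"
    using isCont_tendsto_compose[OF isCont_iexp tendsto_minus[OF phase]] .
  have cross1: "(\<lambda>n. cnj (eig1 \<theta>) ^ n * eig2 (?t n) ^ n * cinner (proj1 \<phi> \<theta>) (proj2 \<phi> (?t n))) \<longlonglongrightarrow> 0"
    using lim2[of "proj1 \<phi> \<theta>" \<phi>]
    by (intro tendsto_zero_mult_unimodular) (simp_all add: cinner_proj1_proj2 norm_mult norm_power)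
  have cross2: "(\<lambda>n. cnj (eig2 \<theta>) ^ n * eig1 (?t n) ^ n * cinner (proj2 \<phi> \<theta>) (proj1 \<phi> (?t n))) \<longlonglongrightarrow> 0"
    using lim1[of "proj2 \<phi> \<theta>" \<phi>]
    by (intro tendsto_zero_mult_unimodular)
       (simp_all add: cinner_commute[of "proj2 \<phi> \<theta>"] cinner_proj1_proj2 norm_mult norm_power)
  have "(\<lambda>n. cinner (had_fourier \<phi> n \<theta>) (had_fourier \<phi> n (?t n))) \<longlonglongrightarrow>
      iexp (\<xi> * - vel \<theta>) * cinner (proj1 \<phi> \<theta>) (proj1 \<phi> \<theta>) + 0 + 0
      + iexp (- (\<xi> * - vel \<theta>)) * cinner (proj2 \<phi> \<theta>) (proj2 \<phi> \<theta>)"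
    unfolding cinner_had_fourier_eigen
    by (intro tendsto_add tendsto_mult diag1 diag2 cross1 cross2 lim1 lim2)
  then show ?thesis
    unfolding char_limit_integrand_def cinner_self by (simp add: algebra_simps)
qed

definition char_limit :: "complex \<times> complex \<Rightarrow> real \<Rightarrow> complex" where
  "char_limit \<phi> \<xi> = integral {0..2 * pi} (char_limit_integrand \<phi> \<xi>) / (2 * pi)"

lemma tendsto_had_char:
  "(\<lambda>n. \<Sum>k\<in>{- int n..int n}. complex_of_real (had_prob \<phi> n k) * iexp (\<xi> * (of_int k / real n)))
     \<longlonglongrightarrow> char_limit \<phi> \<xi>"
proof -
  let ?I = "\<lambda>n \<theta>. cinner (had_fourier \<phi> n \<theta>) (had_fourier \<phi> n (\<theta> + \<xi> / real n))"
  have char: "(\<Sum>k\<in>{- int n..int n}. complex_of_real (had_prob \<phi> n k) * iexp (\<xi> * (of_int k / real n)))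
      = integral {0..2 * pi} (?I n) / (2 * pi)" for n
    using had_char_fourier[where n = n and h = "\<xi> / real n" and a = 0] by (simp add: field_simps)
  have "(\<lambda>n. integral {0..2 * pi} (?I n)) \<longlonglongrightarrow> integral {0..2 * pi} (char_limit_integrand \<phi> \<xi>)"
  proof (rule dominated_convergence(2))
    show "?I n integrable_on {0..2 * pi}" for n
      unfolding cinner_def had_fourier_def
      by (intro integrable_continuous_interval continuous_intros
          continuous_on_compose2[OF continuous_on_fourier2(1)] continuous_on_compose2[OF continuous_on_fourier2(2)])
        auto
    show "(\<lambda>_. sqnorm \<phi>) integrable_on {0..2 * pi}"
      by (intro integrable_continuous_interval continuous_intros)
    show "norm (?I n \<theta>) \<le> sqnorm \<phi>" for n \<theta>
      using norm_cinner_le[of "had_fourier \<phi> n \<theta>" "had_fourier \<phi> n (\<theta> + \<xi> / real n)"]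
      by (simp add: sqnorm_had_fourier)
    show "(\<lambda>n. ?I n \<theta>) \<longlonglongrightarrow> char_limit_integrand \<phi> \<xi> \<theta>" for \<theta>
      by (rule tendsto_cinner_had_fourier)
  qed
  then show ?thesis
    unfolding char char_limit_def by (intro tendsto_intros) auto
qed

section \<open>Weak convergence of \<open>X\<^sub>n / n\<close>\<close>

definition had_pmf :: "complex \<times> complex \<Rightarrow> nat \<Rightarrow> int pmf" where
  "had_pmf \<phi> n = embed_pmf (had_prob \<phi> n)"

definition scaled_law :: "complex \<times> complex \<Rightarrow> nat \<Rightarrow> real measure" where
  "scaled_law \<phi> n = distr (measure_pmf (had_pmf \<phi> n)) borel (\<lambda>k. real_of_int k / real n)"

lemma nn_integral_had_prob:
  "(\<integral>\<^sup>+ k. ennreal (had_prob \<phi> n k) \<partial>count_space UNIV) = ennreal (sqnorm \<phi>)"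
proof -
  have "(\<integral>\<^sup>+ k. ennreal (had_prob \<phi> n k) \<partial>count_space UNIV) =
     (\<integral>\<^sup>+ k. ennreal (had_prob \<phi> n k) * indicator {- int n..int n} k \<partial>count_space UNIV)"
    by (intro nn_integral_cong) (auto simp: had_prob_outside split: split_indicator)
  also have "\<dots> = (\<Sum>k\<in>{- int n..int n}. ennreal (had_prob \<phi> n k))"
    by (simp add: nn_integral_count_space_indicator[symmetric] nn_integral_count_space_finite)
  also have "\<dots> = ennreal (sqnorm \<phi>)"
    by (simp add: sum_ennreal had_prob_nonneg sum_had_prob)
  finally show ?thesis .
qed

lemma pmf_had_pmf: "sqnorm \<phi> = 1 \<Longrightarrow> pmf (had_pmf \<phi> n) k = had_prob \<phi> n k"
  unfolding had_pmf_def by (rule pmf_embed_pmf) (simp_all add: had_prob_nonneg nn_integral_had_prob)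

lemma set_had_pmf: "sqnorm \<phi> = 1 \<Longrightarrow> set_pmf (had_pmf \<phi> n) \<subseteq> {- int n..int n}"
  unfolding had_pmf_def
  by (subst set_embed_pmf) (auto simp: had_prob_nonneg nn_integral_had_prob intro: ccontr dest: had_prob_outside)

lemma real_distribution_scaled_law: "real_distribution (scaled_law \<phi> n)"
  unfolding scaled_law_def
  by (auto intro!: real_distribution.intro real_distribution_axioms.intro measure_pmf.prob_space_distr)

lemma integral_scaled_law:
  fixes F :: "real \<Rightarrow> 'b::{banach, second_countable_topology}"
  assumes "sqnorm \<phi> = 1" and [measurable]: "F \<in> borel_measurable borel"
  shows "integral\<^sup>L (scaled_law \<phi> n) F = (\<Sum>k\<in>{- int n..int n}. had_prob \<phi> n k *\<^sub>R F (of_int k / real n))"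
proof -
  have "integral\<^sup>L (scaled_law \<phi> n) F = integral\<^sup>L (measure_pmf (had_pmf \<phi> n)) (\<lambda>k. F (of_int k / real n))"
    unfolding scaled_law_def by (rule integral_distr) auto
  also have "\<dots> = (\<Sum>k\<in>{- int n..int n}. pmf (had_pmf \<phi> n) k *\<^sub>R F (of_int k / real n))"
    by (rule integral_measure_pmf, simp, use set_had_pmf[OF assms(1), of n] in blast)
  finally show ?thesis by (simp add: pmf_had_pmf assms(1))
qed

lemma char_scaled_law:
  "sqnorm \<phi> = 1 \<Longrightarrow> char (scaled_law \<phi> n) \<xi> =
     (\<Sum>k\<in>{- int n..int n}. complex_of_real (had_prob \<phi> n k) * iexp (\<xi> * (of_int k / real n)))"
  unfolding char_def by (simp add: integral_scaled_law scaleR_conv_of_real)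

lemma cdf_scaled_law:
  assumes "sqnorm \<phi> = 1"
  shows "cdf (scaled_law \<phi> n) x = had_cdf_scaled \<phi> n x"
proof -
  let ?M = "measure_pmf (had_pmf \<phi> n)"
  let ?T = "{k \<in> {- int n..int n}. real_of_int k / real n \<le> x}"
  have "cdf (scaled_law \<phi> n) x = measure ?M {k. real_of_int k / real n \<le> x}"
    unfolding cdf_def scaled_law_def by (subst measure_distr) (auto simp: vimage_def)
  also have "\<dots> = measure ?M ?T"
    using set_had_pmf[OF assms, of n]
    by (intro measure_eq_AE AE_pmfI) auto
  also have "\<dots> = (\<Sum>k\<in>?T. pmf (had_pmf \<phi> n) k)"
    by (intro measure_measure_pmf_finite) (rule finite_subset[of _ "{- int n..int n}"]; auto)
  finally show ?thesis
    unfolding had_cdf_scaled_def by (simp add: pmf_had_pmf assms)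
qed

lemma integrable_lborel_indicator_Icc:
  fixes f :: "real \<Rightarrow> 'b::euclidean_space"
  assumes "continuous_on {a..b} f"
  shows "integrable lborel (\<lambda>\<theta>. indicator {a..b} \<theta> *\<^sub>R f \<theta>)"
    and "(LINT \<theta>|lborel. indicator {a..b} \<theta> *\<^sub>R f \<theta>) = integral {a..b} f"
proof -
  show i: "integrable lborel (\<lambda>\<theta>. indicator {a..b} \<theta> *\<^sub>R f \<theta>)"
    by (rule borel_integrable_compact) (auto intro: assms)
  show "(LINT \<theta>|lborel. indicator {a..b} \<theta> *\<^sub>R f \<theta>) = integral {a..b} f"
    using set_borel_integral_eq_integral(2)[of "{a..b}" f] i
    unfolding set_lebesgue_integral_def set_integrable_def by simp
qed

lemma cos_add_4pi: "cos (\<theta> + 4 * pi) = cos \<theta>" and sin_add_4pi: "sin (\<theta> + 4 * pi) = sin \<theta>"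
proof -
  have "\<theta> + 4 * pi = \<theta> + 2 * pi + 2 * pi" by simp
  then show "cos (\<theta> + 4 * pi) = cos \<theta>" "sin (\<theta> + 4 * pi) = sin \<theta>"
    by (simp_all only: sin_periodic cos_periodic)
qed

lemma vel_add_4pi: "vel (\<theta> + 4 * pi) = vel \<theta>"
  by (simp only: vel_def rho_def cos_add_4pi)

lemma proj2_add_4pi: "proj2 \<phi> (\<theta> + 4 * pi) = proj2 \<phi> \<theta>"
proof -
  have "iexp (\<theta> + 4 * pi) = iexp \<theta>" "iexp (- (\<theta> + 4 * pi)) = iexp (- \<theta>)"
    using iexp_int_periodic[of 2 "\<theta> / 2"] iexp_int_periodic[of "- 2" "\<theta> / 2"]
    by (simp_all add: algebra_simps)
  then have "had_symbol (\<theta> + 4 * pi) = had_symbol \<theta>"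
    by (intro ext) (simp only: had_symbol_def)
  then show ?thesis
    by (simp only: proj2_def proj1_def eig1_def eig2_def omega_def sin_add_4pi)
qed

text \<open>The limit law is a mixture of the laws of \<open>- vel \<Theta>\<close> and \<open>vel \<Theta>\<close>, \<open>\<Theta>\<close> uniform on
  \<open>[0, 2\<pi>]\<close>, with weights given by the two spectral components. To write it as one image measure,
  the second component is moved to \<open>[4\<pi>, 6\<pi>]\<close>, where \<open>vel\<close> and \<open>proj2\<close> take the same values.\<close>

definition limit_weight :: "complex \<times> complex \<Rightarrow> real \<Rightarrow> real" where
  "limit_weight \<phi> \<theta> = indicator {0..2 * pi} \<theta> * (sqnorm (proj1 \<phi> \<theta>) / (2 * pi))
                     + indicator {4 * pi..6 * pi} \<theta> * (sqnorm (proj2 \<phi> \<theta>) / (2 * pi))"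

definition limit_map :: "real \<Rightarrow> real" where
  "limit_map \<theta> = (if \<theta> \<le> 3 * pi then - vel \<theta> else vel \<theta>)"

definition limit_law :: "complex \<times> complex \<Rightarrow> real measure" where
  "limit_law \<phi> = distr (density lborel (\<lambda>\<theta>. ennreal (limit_weight \<phi> \<theta>))) borel limit_map"

lemma measurable_vel_sqnorm_proj [measurable]:
  "vel \<in> borel_measurable borel"
  "(\<lambda>\<theta>. sqnorm (proj1 \<phi> \<theta>)) \<in> borel_measurable borel"
  "(\<lambda>\<theta>. sqnorm (proj2 \<phi> \<theta>)) \<in> borel_measurable borel"
  by (intro borel_measurable_continuous_onI continuous_intros)+

lemma limit_map_measurable [measurable]: "limit_map \<in> borel_measurable borel"
  unfolding limit_map_def[abs_def] by measurable

lemma limit_weight_measurable [measurable]: "limit_weight \<phi> \<in> borel_measurable borel"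
  unfolding limit_weight_def[abs_def] by measurable

lemma limit_weight_nonneg: "limit_weight \<phi> \<theta> \<ge> 0"
  unfolding limit_weight_def by (intro add_nonneg_nonneg mult_nonneg_nonneg) (auto simp: sqnorm_nonneg)

lemma limit_weight_scaleR_split:
  fixes F :: "real \<Rightarrow> 'b::real_vector"
  shows "limit_weight \<phi> \<theta> *\<^sub>R F (limit_map \<theta>) =
     indicator {0..2 * pi} \<theta> *\<^sub>R ((sqnorm (proj1 \<phi> \<theta>) / (2 * pi)) *\<^sub>R F (- vel \<theta>))
   + indicator {4 * pi..6 * pi} \<theta> *\<^sub>R ((sqnorm (proj2 \<phi> \<theta>) / (2 * pi)) *\<^sub>R F (vel \<theta>))"
proof (cases "\<theta> \<in> {0..2 * pi}")
  case True
  then have "\<theta> \<notin> {4 * pi..6 * pi}" "\<theta> \<le> 3 * pi"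
    by (smt (verit) pi_gt_zero atLeastAtMost_iff)+
  with True show ?thesis
    by (simp add: limit_weight_def limit_map_def)
next
  case False
  moreover have "\<not> \<theta> \<le> 3 * pi" if "\<theta> \<in> {4 * pi..6 * pi}"
    using that by (smt (verit) pi_gt_zero atLeastAtMost_iff)
  ultimately show ?thesis
    by (cases "\<theta> \<in> {4 * pi..6 * pi}") (simp_all add: limit_weight_def limit_map_def)
qed

lemma integral_limit_law:
  fixes F :: "real \<Rightarrow> 'b::euclidean_space"
  assumes F: "continuous_on UNIV F"
  shows "integrable (limit_law \<phi>) F"
    and "integral\<^sup>L (limit_law \<phi>) F =
          integral {0..2 * pi} (\<lambda>\<theta>. (sqnorm (proj1 \<phi> \<theta>) / (2 * pi)) *\<^sub>R F (- vel \<theta>))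
        + integral {0..2 * pi} (\<lambda>\<theta>. (sqnorm (proj2 \<phi> \<theta>) / (2 * pi)) *\<^sub>R F (vel \<theta>))"
proof -
  have [measurable]: "F \<in> borel_measurable borel"
    by (rule borel_measurable_continuous_onI[OF F])
  let ?f1 = "\<lambda>\<theta>. (sqnorm (proj1 \<phi> \<theta>) / (2 * pi)) *\<^sub>R F (- vel \<theta>)"
  let ?f2 = "\<lambda>\<theta>. (sqnorm (proj2 \<phi> \<theta>) / (2 * pi)) *\<^sub>R F (vel \<theta>)"
  have "continuous_on S ?f1" "continuous_on S ?f2" for S
    by (intro continuous_intros continuous_on_compose2[OF F]; simp)+
  note p1 = integrable_lborel_indicator_Icc[OF this(1)] and p2 = integrable_lborel_indicator_Icc[OF this(2)]
  have int: "integrable lborel (\<lambda>\<theta>. limit_weight \<phi> \<theta> *\<^sub>R F (limit_map \<theta>))"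
    unfolding limit_weight_scaleR_split by (intro Bochner_Integration.integrable_add p1(1) p2(1))
  then show "integrable (limit_law \<phi>) F"
    unfolding limit_law_def
    by (subst integrable_distr_eq, simp, simp, subst integrable_density) (simp_all add: limit_weight_nonneg)
  have "integral\<^sup>L (limit_law \<phi>) F = (LINT \<theta>|lborel. limit_weight \<phi> \<theta> *\<^sub>R F (limit_map \<theta>))"
    unfolding limit_law_def
    by (subst integral_distr, simp, simp, subst integral_density) (simp_all add: limit_weight_nonneg)
  also have "\<dots> = integral {0..2 * pi} ?f1 + integral {4 * pi..6 * pi} ?f2"
    unfolding limit_weight_scaleR_split
    by (subst Bochner_Integration.integral_add[OF p1(1) p2(1)]) (simp only: p1(2) p2(2))
  also have "integral {4 * pi..6 * pi} ?f2 = integral {0..2 * pi} (?f2 \<circ> (+) (4 * pi))"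
    using integral_shift_Icc_real[of 0 "2 * pi" ?f2 "4 * pi"] by simp
  also have "?f2 \<circ> (+) (4 * pi) = ?f2"
    by (rule ext) (simp add: add.commute[of "4 * pi"] proj2_add_4pi vel_add_4pi)
  finally show "integral\<^sup>L (limit_law \<phi>) F = integral {0..2 * pi} ?f1 + integral {0..2 * pi} ?f2" .
qed

lemma real_distribution_limit_law:
  assumes "sqnorm \<phi> = 1"
  shows "real_distribution (limit_law \<phi>)"
proof -
  have one: "continuous_on UNIV (\<lambda>_::real. 1::real)" by simp
  have "integral {0..2 * pi} (\<lambda>\<theta>. sqnorm (proj1 \<phi> \<theta>) / (2 * pi))
      + integral {0..2 * pi} (\<lambda>\<theta>. sqnorm (proj2 \<phi> \<theta>) / (2 * pi))
    = integral {0..2 * pi} (\<lambda>\<theta>. sqnorm (proj1 \<phi> \<theta>) / (2 * pi) + sqnorm (proj2 \<phi> \<theta>) / (2 * pi))"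
    by (rule integral_add[symmetric]; intro integrable_continuous_interval continuous_intros; simp)
  also have "\<dots> = 1"
    using sqnorm_proj1_add_proj2[of \<phi>] assms by (simp add: add_divide_distrib[symmetric])
  finally have "integral\<^sup>L (limit_law \<phi>) (\<lambda>_. 1::real) = 1"
    using integral_limit_law(2)[OF one, of \<phi>] by simp
  moreover have "emeasure (limit_law \<phi>) (space (limit_law \<phi>)) = (\<integral>\<^sup>+ x. ennreal 1 \<partial>limit_law \<phi>)"
    by simp
  moreover have "\<dots> = ennreal (integral\<^sup>L (limit_law \<phi>) (\<lambda>_. 1::real))"
    using integral_limit_law(1)[OF one, of \<phi>] by (intro nn_integral_eq_integral) auto
  ultimately have "emeasure (limit_law \<phi>) (space (limit_law \<phi>)) = 1"
    by simp
  then show ?thesis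
    by (intro real_distribution.intro real_distribution_axioms.intro prob_spaceI) (simp_all add: limit_law_def)
qed

lemma char_limit_law:
  assumes "sqnorm \<phi> = 1"
  shows "char (limit_law \<phi>) t = char_limit \<phi> t"
proof -
  let ?f1 = "\<lambda>\<theta>. (sqnorm (proj1 \<phi> \<theta>) / (2 * pi)) *\<^sub>R iexp (t * - vel \<theta>)"
  let ?f2 = "\<lambda>\<theta>. (sqnorm (proj2 \<phi> \<theta>) / (2 * pi)) *\<^sub>R iexp (t * vel \<theta>)"
  have "char (limit_law \<phi>) t = integral {0..2 * pi} ?f1 + integral {0..2 * pi} ?f2"
    unfolding char_def by (rule integral_limit_law(2)) (intro continuous_intros)
  also have "\<dots> = integral {0..2 * pi} (\<lambda>\<theta>. ?f1 \<theta> + ?f2 \<theta>)"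
    by (rule integral_add[symmetric]; intro integrable_continuous_interval continuous_intros; simp)
  also have "(\<lambda>\<theta>. ?f1 \<theta> + ?f2 \<theta>) = (\<lambda>\<theta>. (1 / (2 * pi)) *\<^sub>R char_limit_integrand \<phi> t \<theta>)"
    by (rule ext) (simp add: char_limit_integrand_def scaleR_conv_of_real algebra_simps)
  finally show ?thesis
    by (simp add: char_limit_def scaleR_conv_of_real)
qed

theorem weak_conv_scaled_law:
  assumes "sqnorm \<phi> = 1"
  shows "weak_conv_m (scaled_law \<phi>) (limit_law \<phi>)"
proof (rule levy_continuity)
  show "real_distribution (scaled_law \<phi> n)" for n
    by (rule real_distribution_scaled_law)
  show "real_distribution (limit_law \<phi>)"
    by (rule real_distribution_limit_law[OF assms])
  show "(\<lambda>n. char (scaled_law \<phi> n) t) \<longlonglongrightarrow> char (limit_law \<phi>) t" for t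
    unfolding char_scaled_law[OF assms] char_limit_law[OF assms] by (rule tendsto_had_char)
qed

section \<open>Convergence of the scaled mean and standard deviation\<close>

definition clamp1 :: "real \<Rightarrow> real" where
  "clamp1 x = max (- 1) (min 1 x)"

lemma isCont_clamp1: "isCont clamp1 x"
  unfolding clamp1_def[abs_def] by (intro continuous_intros)

lemma continuous_on_clamp1 [continuous_intros]: "continuous_on S clamp1"
  unfolding clamp1_def[abs_def] by (intro continuous_intros)

lemma clamp1_eq: "\<bar>x\<bar> \<le> 1 \<Longrightarrow> clamp1 x = x"
  unfolding clamp1_def by auto

lemma norm_clamp1_le: "norm (clamp1 x) \<le> 1"
  unfolding clamp1_def by auto

lemma abs_int_div_le_1: "k \<in> {- int n..int n} \<Longrightarrow> \<bar>real_of_int k / real n\<bar> \<le> 1"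
  by (cases "n = 0") (auto simp: abs_div divide_le_eq_1)

lemma had_E_div: "had_E \<phi> n / real n = (\<Sum>k\<in>{- int n..int n}. had_prob \<phi> n k * (of_int k / real n))"
  unfolding had_E_def sum_divide_distrib by (simp add: algebra_simps)

lemma had_sd_div:
  assumes "sqnorm \<phi> = 1"
  shows "had_sd \<phi> n / real n =
    sqrt ((\<Sum>k\<in>{- int n..int n}. had_prob \<phi> n k * (of_int k / real n)\<^sup>2) - (had_E \<phi> n / real n)\<^sup>2)"
proof (cases "n = 0")
  case True
  then show ?thesis by (simp add: had_sd_def had_Var_def had_E_def)
next
  case False
  let ?S = "{- int n..int n}" and ?E = "had_E \<phi> n"
  have "had_Var \<phi> n =
      (\<Sum>k\<in>?S. had_prob \<phi> n k * (of_int k)\<^sup>2) - 2 * ?E * ?E + ?E\<^sup>2 * (\<Sum>k\<in>?S. had_prob \<phi> n k)"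
    unfolding had_Var_def
    by (simp add: power2_diff algebra_simps sum.distrib sum_subtractf sum_distrib_left sum_distrib_right had_E_def)
  also have "\<dots> = (\<Sum>k\<in>?S. had_prob \<phi> n k * (of_int k)\<^sup>2) - ?E\<^sup>2"
    using assms by (simp add: sum_had_prob power2_eq_square)
  finally have "had_Var \<phi> n / (real n)\<^sup>2 =
      (\<Sum>k\<in>?S. had_prob \<phi> n k * (of_int k)\<^sup>2) / (real n)\<^sup>2 - (?E / real n)\<^sup>2"
    by (simp add: diff_divide_distrib power_divide)
  also have "(\<Sum>k\<in>?S. had_prob \<phi> n k * (of_int k)\<^sup>2) / (real n)\<^sup>2 =
      (\<Sum>k\<in>?S. had_prob \<phi> n k * (of_int k / real n)\<^sup>2)"
    by (simp add: sum_divide_distrib power_divide)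
  finally have "had_Var \<phi> n / (real n)\<^sup>2 =
      (\<Sum>k\<in>?S. had_prob \<phi> n k * (of_int k / real n)\<^sup>2) - (?E / real n)\<^sup>2" .
  moreover have "had_sd \<phi> n / real n = sqrt (had_Var \<phi> n / (real n)\<^sup>2)"
    unfolding had_sd_def by (simp add: real_sqrt_divide)
  ultimately show ?thesis by simp
qed

lemma integral_scaled_law_clamp1:
  assumes "sqnorm \<phi> = 1"
  shows "integral\<^sup>L (scaled_law \<phi> n) clamp1 = had_E \<phi> n / real n"
    and "integral\<^sup>L (scaled_law \<phi> n) (\<lambda>x. (clamp1 x)\<^sup>2) =
           (\<Sum>k\<in>{- int n..int n}. had_prob \<phi> n k * (of_int k / real n)\<^sup>2)"
proof -
  have meas: "clamp1 \<in> borel_measurable borel" "(\<lambda>x. (clamp1 x)\<^sup>2) \<in> borel_measurable borel"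
    by (intro borel_measurable_continuous_onI continuous_intros)+
  show "integral\<^sup>L (scaled_law \<phi> n) clamp1 = had_E \<phi> n / real n"
    unfolding integral_scaled_law[OF assms meas(1)] had_E_div
    by (intro sum.cong refl) (simp add: clamp1_eq[OF abs_int_div_le_1])
  show "integral\<^sup>L (scaled_law \<phi> n) (\<lambda>x. (clamp1 x)\<^sup>2) =
      (\<Sum>k\<in>{- int n..int n}. had_prob \<phi> n k * (of_int k / real n)\<^sup>2)"
    unfolding integral_scaled_law[OF assms meas(2)]
    by (intro sum.cong refl) (simp add: clamp1_eq[OF abs_int_div_le_1])
qed

definition limit_mean :: "complex \<times> complex \<Rightarrow> real" where
  "limit_mean \<phi> = integral {0..2 * pi} (\<lambda>\<theta>. (sqnorm (proj2 \<phi> \<theta>) - sqnorm (proj1 \<phi> \<theta>)) / (2 * pi) * vel \<theta>)"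

definition vel_sq_mean :: real where
  "vel_sq_mean = integral {0..2 * pi} (\<lambda>\<theta>. (vel \<theta>)\<^sup>2 / (2 * pi))"

lemma integral_limit_law_clamp1:
  assumes "sqnorm \<phi> = 1"
  shows "integral\<^sup>L (limit_law \<phi>) clamp1 = limit_mean \<phi>"
    and "integral\<^sup>L (limit_law \<phi>) (\<lambda>x. (clamp1 x)\<^sup>2) = vel_sq_mean"
proof -
  have vel: "clamp1 (- vel \<theta>) = - vel \<theta>" "clamp1 (vel \<theta>) = vel \<theta>" for \<theta>
    using abs_vel_le[of \<theta>] by (simp_all add: clamp1_eq)
  have "integral\<^sup>L (limit_law \<phi>) clamp1 =
      integral {0..2 * pi} (\<lambda>\<theta>. (sqnorm (proj1 \<phi> \<theta>) / (2 * pi)) * (- vel \<theta>))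
    + integral {0..2 * pi} (\<lambda>\<theta>. (sqnorm (proj2 \<phi> \<theta>) / (2 * pi)) * vel \<theta>)"
    unfolding integral_limit_law(2)[OF continuous_on_clamp1] vel by simp
  also have "\<dots> = integral {0..2 * pi}
      (\<lambda>\<theta>. (sqnorm (proj1 \<phi> \<theta>) / (2 * pi)) * (- vel \<theta>) + (sqnorm (proj2 \<phi> \<theta>) / (2 * pi)) * vel \<theta>)"
    by (rule integral_add[symmetric]; intro integrable_continuous_interval continuous_intros; simp)
  also have "\<dots> = limit_mean \<phi>"
    unfolding limit_mean_def by (simp add: algebra_simps diff_divide_distrib)
  finally show "integral\<^sup>L (limit_law \<phi>) clamp1 = limit_mean \<phi>" .
  have "integral\<^sup>L (limit_law \<phi>) (\<lambda>x. (clamp1 x)\<^sup>2) =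
      integral {0..2 * pi} (\<lambda>\<theta>. (sqnorm (proj1 \<phi> \<theta>) / (2 * pi)) * (vel \<theta>)\<^sup>2)
    + integral {0..2 * pi} (\<lambda>\<theta>. (sqnorm (proj2 \<phi> \<theta>) / (2 * pi)) * (vel \<theta>)\<^sup>2)"
    by (subst integral_limit_law(2)) (intro continuous_intros, simp add: vel)
  also have "\<dots> = integral {0..2 * pi}
      (\<lambda>\<theta>. (sqnorm (proj1 \<phi> \<theta>) / (2 * pi)) * (vel \<theta>)\<^sup>2 + (sqnorm (proj2 \<phi> \<theta>) / (2 * pi)) * (vel \<theta>)\<^sup>2)"
    by (rule integral_add[symmetric]; intro integrable_continuous_interval continuous_intros; simp)
  also have "\<dots> = vel_sq_mean"
    unfolding vel_sq_mean_def
  proof (intro integral_cong)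
    fix \<theta>
    have "sqnorm (proj1 \<phi> \<theta>) + sqnorm (proj2 \<phi> \<theta>) = 1"
      using sqnorm_proj1_add_proj2[of \<phi> \<theta>] assms by simp
    then show "(sqnorm (proj1 \<phi> \<theta>) / (2 * pi)) * (vel \<theta>)\<^sup>2 + (sqnorm (proj2 \<phi> \<theta>) / (2 * pi)) * (vel \<theta>)\<^sup>2
        = (vel \<theta>)\<^sup>2 / (2 * pi)"
      by (simp add: field_simps) (metis distrib_left mult.commute mult_1)
  qed
  finally show "integral\<^sup>L (limit_law \<phi>) (\<lambda>x. (clamp1 x)\<^sup>2) = vel_sq_mean" .
qed

text \<open>\<open>X\<^sub>n / n\<close> takes values in \<open>[-1, 1]\<close>, where \<open>clamp1\<close> is the identity, so its moments are integrals
  of bounded continuous functions and converge under weak convergence.\<close>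

theorem tendsto_had_moments:
  assumes "sqnorm \<phi> = 1"
  shows "(\<lambda>n. had_E \<phi> n / real n) \<longlonglongrightarrow> limit_mean \<phi>"
    and "(\<lambda>n. had_sd \<phi> n / real n) \<longlonglongrightarrow> sqrt (vel_sq_mean - (limit_mean \<phi>)\<^sup>2)"
proof -
  note weak = weak_conv_imp_integral_bdd_continuous_conv[OF real_distribution_scaled_law
      real_distribution_limit_law[OF assms] weak_conv_scaled_law[OF assms]]
  have mean: "(\<lambda>n. had_E \<phi> n / real n) \<longlonglongrightarrow> limit_mean \<phi>"
    using weak[OF isCont_clamp1 norm_clamp1_le]
    unfolding integral_scaled_law_clamp1(1)[OF assms] integral_limit_law_clamp1(1)[OF assms] .
  have cont: "isCont (\<lambda>x. (clamp1 x)\<^sup>2) x" for x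
    by (intro continuous_intros isCont_clamp1)
  have bound: "norm ((clamp1 x)\<^sup>2) \<le> 1" for x
    using norm_clamp1_le[of x] by (simp add: abs_square_le_1)
  have second: "(\<lambda>n. \<Sum>k\<in>{- int n..int n}. had_prob \<phi> n k * (of_int k / real n)\<^sup>2) \<longlonglongrightarrow> vel_sq_mean"
    using weak[OF cont bound]
    unfolding integral_scaled_law_clamp1(2)[OF assms] integral_limit_law_clamp1(2)[OF assms] .
  show "(\<lambda>n. had_E \<phi> n / real n) \<longlonglongrightarrow> limit_mean \<phi>"
    by (rule mean)
  show "(\<lambda>n. had_sd \<phi> n / real n) \<longlonglongrightarrow> sqrt (vel_sq_mean - (limit_mean \<phi>)\<^sup>2)"
    unfolding had_sd_div[OF assms] by (intro tendsto_real_sqrt tendsto_diff tendsto_power mean second)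
qed

section \<open>The mean square of the group velocity\<close>

definition inv_sqrt2 :: real where
  "inv_sqrt2 = 1 / sqrt 2"

definition branch_den :: "real \<Rightarrow> real" where
  "branch_den \<theta> = (cos \<theta>)\<^sup>2 + inv_sqrt2 * (sin \<theta>)\<^sup>2"

definition branch_arg :: "real \<Rightarrow> real" where
  "branch_arg \<theta> = (inv_sqrt2 - 1) * sin \<theta> * cos \<theta> / branch_den \<theta>"

text \<open>By the subtraction formula for \<open>arctan\<close>, \<open>arctan_branch\<close> is a continuous branch of
  \<open>arctan (inv_sqrt2 * tan \<theta>)\<close>; hence its derivative is \<open>sqrt 2 / (1 + cos\<^sup>2 \<theta>)\<close>.\<close>

definition arctan_branch :: "real \<Rightarrow> real" where
  "arctan_branch \<theta> = \<theta> + arctan (branch_arg \<theta>)"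

lemma inv_sqrt2_pos: "inv_sqrt2 > 0" by (simp add: inv_sqrt2_def)
lemma inv_sqrt2_sq: "inv_sqrt2 * inv_sqrt2 = 1/2" by (simp add: inv_sqrt2_def)

lemma branch_den_pos: "branch_den \<theta> > 0"
proof -
  have "inv_sqrt2 \<le> 1" by (simp add: inv_sqrt2_def)
  then have a: "inv_sqrt2 * (cos \<theta>)\<^sup>2 \<le> (cos \<theta>)\<^sup>2" using inv_sqrt2_pos by (intro mult_left_le_one_le) auto
  have b: "inv_sqrt2 = inv_sqrt2 * (sin \<theta>)\<^sup>2 + inv_sqrt2 * (cos \<theta>)\<^sup>2"
    using sin_cos_squared_add[of \<theta>] by (metis distrib_left mult.right_neutral)
  have "branch_den \<theta> \<ge> inv_sqrt2" unfolding branch_den_def using a b by linarith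
  then show ?thesis using inv_sqrt2_pos by simp
qed

lemma has_real_derivative_branch_den:
  "(branch_den has_real_derivative (2 * inv_sqrt2 - 2) * sin \<theta> * cos \<theta>) (at \<theta>)"
  unfolding branch_den_def[abs_def] by (auto intro!: derivative_eq_intros simp: algebra_simps)

lemma has_real_derivative_branch_arg:
  "(branch_arg has_real_derivative
      ((inv_sqrt2 - 1) * ((cos \<theta>)\<^sup>2 - (sin \<theta>)\<^sup>2) * branch_den \<theta>
       - (2 * inv_sqrt2 - 2) * sin \<theta> * cos \<theta> * ((inv_sqrt2 - 1) * sin \<theta> * cos \<theta>))
      / (branch_den \<theta> * branch_den \<theta>)) (at \<theta>)"
proof -
  have D: "branch_den \<theta> \<noteq> 0" using branch_den_pos[of \<theta>] by simp
  have n: "((\<lambda>\<theta>. (inv_sqrt2 - 1) * sin \<theta> * cos \<theta>) has_real_derivative (inv_sqrt2 - 1) * ((cos \<theta>)\<^sup>2 - (sin \<theta>)\<^sup>2)) (at \<theta>)"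
    by (auto intro!: derivative_eq_intros simp: algebra_simps power2_eq_square)
  show ?thesis unfolding branch_arg_def[abs_def]
    using DERIV_quotient[OF n has_real_derivative_branch_den D] by simp
qed

lemma arctan_branch_derivative_identity:
  fixes s c k D :: real
  assumes sc: "s\<^sup>2 + c\<^sup>2 = 1" and k: "k * k = 1/2" and Dd: "D = c\<^sup>2 + k * s\<^sup>2" and Dp: "D > 0"
  shows "1 + inverse (1 + ((k - 1) * s * c / D)\<^sup>2) *
     (((k - 1) * (c\<^sup>2 - s\<^sup>2) * D - (2 * k - 2) * s * c * ((k - 1) * s * c)) / (D * D))
     = 2 * k / (1 + c\<^sup>2)"
proof -
  define N where "N = (k - 1) * (c\<^sup>2 - s\<^sup>2) * D - (2 * k - 2) * s * c * ((k - 1) * s * c)"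
  define Q where "Q = D * D + ((k - 1) * s * c) * ((k - 1) * s * c)"
  have c1: "1 + c\<^sup>2 > 0" by (simp add: add_pos_nonneg)
  have q: "Q > 0" unfolding Q_def using Dp by (simp add: add_pos_nonneg)
  have e: "1 + ((k - 1) * s * c / D)\<^sup>2 = Q / (D * D)"
    unfolding Q_def using Dp by (simp add: field_simps power2_eq_square)
  have "inverse (Q / (D * D)) * (N / (D * D)) = N / Q"
    using Dp q by (simp add: field_simps)
  then have "1 + inverse (1 + ((k - 1) * s * c / D)\<^sup>2) * (N / (D * D)) = 1 + N / Q"
    unfolding e by simp
  also have "\<dots> = 2 * k / (1 + c\<^sup>2)"
  proof -
    have "(Q + N) * (1 + c\<^sup>2) = 2 * k * Q"
      unfolding Q_def N_def Dd using sc k by algebra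
    then show ?thesis using q c1 by (simp add: field_simps)
  qed
  finally show ?thesis unfolding N_def .
qed

lemma has_real_derivative_arctan_branch:
  "(arctan_branch has_real_derivative sqrt 2 / (1 + (cos \<theta>)\<^sup>2)) (at \<theta>)"
proof -
  let ?D = "((inv_sqrt2 - 1) * ((cos \<theta>)\<^sup>2 - (sin \<theta>)\<^sup>2) * branch_den \<theta>
       - (2 * inv_sqrt2 - 2) * sin \<theta> * cos \<theta> * ((inv_sqrt2 - 1) * sin \<theta> * cos \<theta>))
      / (branch_den \<theta> * branch_den \<theta>)"
  have "(arctan_branch has_real_derivative 1 + inverse (1 + (branch_arg \<theta>)\<^sup>2) * ?D) (at \<theta>)"
    unfolding arctan_branch_def[abs_def]
    by (intro DERIV_add DERIV_ident DERIV_chain2[OF DERIV_arctan has_real_derivative_branch_arg])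
  also have "1 + inverse (1 + (branch_arg \<theta>)\<^sup>2) * ?D = 2 * inv_sqrt2 / (1 + (cos \<theta>)\<^sup>2)"
    unfolding branch_arg_def
    by (rule arctan_branch_derivative_identity[OF sin_cos_squared_add inv_sqrt2_sq branch_den_def branch_den_pos])
  also have "2 * inv_sqrt2 = sqrt 2"
    unfolding inv_sqrt2_def by (simp add: real_div_sqrt)
  finally show ?thesis .
qed

lemma has_integral_sqrt2_div_one_plus_cos_sq:
  "((\<lambda>\<theta>. sqrt 2 / (1 + (cos \<theta>)\<^sup>2)) has_integral 2 * pi) {0..2 * pi}"
proof -
  have "((\<lambda>\<theta>. sqrt 2 / (1 + (cos \<theta>)\<^sup>2)) has_integral arctan_branch (2 * pi) - arctan_branch 0) {0..2 * pi}"
    by (rule fundamental_theorem_of_calculus)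
       (auto intro!: DERIV_subset[OF has_real_derivative_arctan_branch]
         simp: has_real_derivative_iff_has_vector_derivative[symmetric])
  moreover have "arctan_branch (2 * pi) - arctan_branch 0 = 2 * pi"
    by (simp add: arctan_branch_def branch_arg_def)
  ultimately show ?thesis by simp
qed

lemma vel_sq: "(vel \<theta>)\<^sup>2 = 1 - 1 / (1 + (cos \<theta>)\<^sup>2)"
proof -
  have "1 + (cos \<theta>)\<^sup>2 > 0" by (simp add: add_pos_nonneg)
  then show ?thesis
    unfolding vel_def power_divide rho_sq by (simp add: field_simps)
qed

lemma vel_sq_mean_eq: "vel_sq_mean = (2 - sqrt 2) / 2"
proof -
  have split: "(vel \<theta>)\<^sup>2 / (2 * pi) = 1 / (2 * pi) - (1 / (2 * pi * sqrt 2)) * (sqrt 2 / (1 + (cos \<theta>)\<^sup>2))"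
    for \<theta>
  proof -
    have "1 + (cos \<theta>)\<^sup>2 > 0" by (simp add: add_pos_nonneg)
    then show ?thesis unfolding vel_sq by (simp add: diff_divide_distrib)
  qed
  have "((\<lambda>\<theta>::real. 1 / (2 * pi)) has_integral 1) {0..2 * pi}"
    using has_integral_const_real[of "1 / (2 * pi)" 0 "2 * pi"] by simp
  then have "((\<lambda>\<theta>. (vel \<theta>)\<^sup>2 / (2 * pi)) has_integral 1 - (1 / (2 * pi * sqrt 2)) * (2 * pi)) {0..2 * pi}"
    unfolding split by (intro has_integral_diff has_integral_mult_right has_integral_sqrt2_div_one_plus_cos_sq)
  moreover have "1 - (1 / (2 * pi * sqrt 2)) * (2 * pi) = (2 - sqrt 2) / 2"
    by (simp add: field_simps)
  ultimately show ?thesis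
    unfolding vel_sq_mean_def by (metis integral_unique)
qed

section \<open>Initial states with a symmetric distribution\<close>

definition flip2 :: "complex \<times> complex \<Rightarrow> complex \<times> complex" where
  "flip2 u = (snd u, - fst u)"

lemma sqnorm_flip2: "sqnorm (flip2 u) = sqnorm u"
  by (simp add: sqnorm_def flip2_def)

lemma had_amp_flip2: "had_amp (flip2 \<phi>) n k = cscale ((- 1) ^ n) (flip2 (had_amp \<phi> n (- k)))"
proof (induction n arbitrary: k)
  case 0
  then show ?case by (simp add: had_amp_0 flip2_def cscale_def)
next
  case (Suc n)
  have "- (k + 1) = - k - 1" and "- (k - 1) = - k + 1" by simp_all
  then have "had_amp (flip2 \<phi>) n (k + 1) = cscale ((- 1) ^ n) (flip2 (had_amp \<phi> n (- k - 1)))"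
    and "had_amp (flip2 \<phi>) n (k - 1) = cscale ((- 1) ^ n) (flip2 (had_amp \<phi> n (- k + 1)))"
    using Suc.IH[of "k + 1"] Suc.IH[of "k - 1"] by (simp_all only:)
  then show ?case
    unfolding had_amp_Suc by (simp add: cscale_def flip2_def algebra_simps)
qed

lemma had_amp_cscale: "had_amp (cscale c \<phi>) n k = cscale c (had_amp \<phi> n k)"
  by (induction n arbitrary: k) (simp_all add: had_amp_0 had_amp_Suc cscale_def algebra_simps)

lemma had_prob_reflect:
  assumes "flip2 \<phi> = cscale c \<phi>" and "cmod c = 1"
  shows "had_prob \<phi> n (- k) = had_prob \<phi> n k"
proof -
  have "had_prob \<phi> n (- k) = sqnorm (had_amp (flip2 \<phi>) n k)"
    unfolding had_prob_eq_sqnorm had_amp_flip2 sqnorm_cscale sqnorm_flip2 by (simp add: norm_power)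
  also have "\<dots> = had_prob \<phi> n k"
    unfolding assms(1) had_amp_cscale sqnorm_cscale assms(2) had_prob_eq_sqnorm by simp
  finally show ?thesis .
qed

lemma had_E_eq_0_if_flip2_eq_cscale:
  assumes "flip2 \<phi> = cscale c \<phi>" and "cmod c = 1"
  shows "had_E \<phi> n = 0"
proof -
  have "had_E \<phi> n = (\<Sum>k\<in>{- int n..int n}. real_of_int (- k) * had_prob \<phi> n (- k))"
    unfolding had_E_def by (rule sum.reindex_bij_witness[of _ uminus uminus]) auto
  also have "\<dots> = - had_E \<phi> n"
    unfolding had_E_def had_prob_reflect[OF assms] by (simp add: sum_negf)
  finally show ?thesis by simp
qed

text \<open>The hypotheses of part (a) say \<open>\<beta>\<^sup>2 = - \<alpha>\<^sup>2\<close>, i.e. \<open>(\<alpha>, \<beta>)\<close> is an eigenvector of \<open>flip2\<close>.\<close>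

lemma flip2_eq_cscale:
  assumes \<alpha>: "cmod \<alpha> = 1 / sqrt 2" and \<beta>: "cmod \<beta> = 1 / sqrt 2"
    and orth: "\<alpha> * cnj \<beta> + cnj \<alpha> * \<beta> = 0"
  shows "\<exists>c. cmod c = 1 \<and> flip2 (\<alpha>, \<beta>) = cscale c (\<alpha>, \<beta>)"
proof -
  have half: "z * cnj z = 1 / 2" if "cmod z = 1 / sqrt 2" for z
  proof -
    have "z * cnj z = complex_of_real ((cmod z)\<^sup>2)"
      by (simp only: complex_norm_square)
    then show ?thesis using that by (simp add: power_divide)
  qed
  have "\<alpha> * \<alpha> * (\<beta> * cnj \<beta>) + (\<alpha> * cnj \<alpha>) * (\<beta> * \<beta>) = \<alpha> * \<beta> * (\<alpha> * cnj \<beta> + cnj \<alpha> * \<beta>)"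
    by (simp add: algebra_simps)
  then have "\<alpha> * \<alpha> + \<beta> * \<beta> = 0"
    unfolding orth half[OF \<alpha>] half[OF \<beta>] by (simp add: field_simps)
  then have sq: "\<beta> * \<beta> = - (\<alpha> * \<alpha>)"
    by (simp add: add_eq_0_iff)
  have "\<alpha> \<noteq> 0" using \<alpha> by auto
  then have "(\<beta> / \<alpha>) * \<alpha> = \<beta>" and "(\<beta> / \<alpha>) * \<beta> = - \<alpha>"
    using sq by (simp_all add: field_simps)
  moreover have "cmod (\<beta> / \<alpha>) = 1"
    using \<alpha> \<beta> by (simp add: norm_divide)
  ultimately show ?thesis
    by (intro exI[of _ "\<beta> / \<alpha>"]) (simp add: flip2_def cscale_def)
qed

theorem had_moments_symmetric:
  assumes \<alpha>: "cmod \<alpha> = 1 / sqrt 2" and \<beta>: "cmod \<beta> = 1 / sqrt 2"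
    and orth: "\<alpha> * cnj \<beta> + cnj \<alpha> * \<beta> = 0"
  shows "(\<forall>n. had_E (\<alpha>, \<beta>) n = 0) \<and> (\<lambda>n. had_sd (\<alpha>, \<beta>) n / real n) \<longlonglongrightarrow> sqrt ((2 - sqrt 2) / 2)"
proof -
  have unit: "sqnorm (\<alpha>, \<beta>) = 1"
    using \<alpha> \<beta> by (simp add: power_divide)
  obtain c where "cmod c = 1" "flip2 (\<alpha>, \<beta>) = cscale c (\<alpha>, \<beta>)"
    using flip2_eq_cscale[OF \<alpha> \<beta> orth] by blast
  then have E: "had_E (\<alpha>, \<beta>) n = 0" for n
    by (intro had_E_eq_0_if_flip2_eq_cscale) auto
  have "limit_mean (\<alpha>, \<beta>) = 0"
    using tendsto_had_moments(1)[OF unit] by (simp add: E LIMSEQ_const_iff)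
  with tendsto_had_moments(2)[OF unit] E show ?thesis
    by (simp add: vel_sq_mean_eq)
qed

section \<open>Initial states \<open>(0, e\<^bsup>i t\<^esup>)\<close> and \<open>(e\<^bsup>i t\<^esup>, 0)\<close>: moments\<close>

lemma eig2_eq: "eig2 \<theta> = - (complex_of_real (rho \<theta>) + \<i> * complex_of_real (sin \<theta>)) / complex_of_real (sqrt 2)"
  unfolding eig2_def by (simp add: iexp_minus_eq_cos_sin cos_omega sin_omega complex_eq_iff)

lemma sqnorm_proj1_zero_fst: "sqnorm (proj1 (0, \<beta>) \<theta>) = (cmod \<beta>)\<^sup>2 * (1 - vel \<theta>) / 2"
proof -
  have r: "rho \<theta> > 0" by (rule rho_pos)
  have key: "- (iexp \<theta> * had_entry) - eig2 \<theta> = complex_of_real ((rho \<theta> - cos \<theta>) / sqrt 2)"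
    by (simp add: complex_eq_iff iexp_eq_cos_sin had_entry_def eig2_eq field_simps)
  have f: "fst (proj1 (0, \<beta>) \<theta>) = (1 / complex_of_real (sqrt 2 * rho \<theta>)) * (iexp (- \<theta>) * had_entry * \<beta>)"
    by (simp add: proj1_def cscale_def had_symbol_def eig1_minus_eig2)
  have s: "snd (proj1 (0, \<beta>) \<theta>) = (1 / complex_of_real (sqrt 2 * rho \<theta>)) * ((- (iexp \<theta> * had_entry) - eig2 \<theta>) * \<beta>)"
    by (simp add: proj1_def cscale_def had_symbol_def eig1_minus_eig2 algebra_simps)
  have cf: "cmod (fst (proj1 (0, \<beta>) \<theta>)) = cmod \<beta> / (2 * rho \<theta>)"
    unfolding f using r by (simp add: norm_mult norm_divide norm_had_entry)
  have cs: "cmod (snd (proj1 (0, \<beta>) \<theta>)) = cmod \<beta> * (rho \<theta> - cos \<theta>) / (2 * rho \<theta>)"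
  proof -
    have "rho \<theta> - cos \<theta> \<ge> 0" using abs_cos_le_rho[of \<theta>] by linarith
    then show ?thesis unfolding s key norm_mult norm_divide norm_of_real norm_one using r
      by (simp add: field_simps)
  qed
  have "sqnorm (proj1 (0, \<beta>) \<theta>) = (cmod \<beta>)\<^sup>2 * (1 + (rho \<theta> - cos \<theta>)\<^sup>2) / (4 * (rho \<theta>)\<^sup>2)"
    unfolding sqnorm_def cf cs
    by (simp only: power_divide power_mult_distrib) (simp add: add_divide_distrib[symmetric] distrib_left)
  also have "1 + (rho \<theta> - cos \<theta>)\<^sup>2 = 2 * rho \<theta> * (rho \<theta> - cos \<theta>)"
    using rho_sq[of \<theta>] by (simp add: power2_eq_square algebra_simps)
  also have "(cmod \<beta>)\<^sup>2 * (2 * rho \<theta> * (rho \<theta> - cos \<theta>)) / (4 * (rho \<theta>)\<^sup>2) = (cmod \<beta>)\<^sup>2 * (1 - vel \<theta>) / 2"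
    using r by (simp add: vel_def field_simps power2_eq_square)
  finally show ?thesis .
qed

lemma sqnorm_proj1_zero_snd: "sqnorm (proj1 (\<alpha>, 0) \<theta>) = (cmod \<alpha>)\<^sup>2 * (1 + vel \<theta>) / 2"
proof -
  have r: "rho \<theta> > 0" by (rule rho_pos)
  have key: "iexp (- \<theta>) * had_entry - eig2 \<theta> = complex_of_real ((rho \<theta> + cos \<theta>) / sqrt 2)"
    by (simp add: complex_eq_iff iexp_eq_cos_sin iexp_minus_eq_cos_sin had_entry_def eig2_eq field_simps)
  have f: "fst (proj1 (\<alpha>, 0) \<theta>) = (1 / complex_of_real (sqrt 2 * rho \<theta>)) * ((iexp (- \<theta>) * had_entry - eig2 \<theta>) * \<alpha>)"
    by (simp add: proj1_def cscale_def had_symbol_def eig1_minus_eig2 algebra_simps)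
  have s: "snd (proj1 (\<alpha>, 0) \<theta>) = (1 / complex_of_real (sqrt 2 * rho \<theta>)) * (iexp \<theta> * had_entry * \<alpha>)"
    by (simp add: proj1_def cscale_def had_symbol_def eig1_minus_eig2)
  have cs: "cmod (snd (proj1 (\<alpha>, 0) \<theta>)) = cmod \<alpha> / (2 * rho \<theta>)"
    unfolding s using r by (simp add: norm_mult norm_divide norm_had_entry)
  have cf: "cmod (fst (proj1 (\<alpha>, 0) \<theta>)) = cmod \<alpha> * (rho \<theta> + cos \<theta>) / (2 * rho \<theta>)"
  proof -
    have "rho \<theta> + cos \<theta> \<ge> 0" using abs_cos_le_rho[of \<theta>] by linarith
    then show ?thesis unfolding f key norm_mult norm_divide norm_of_real norm_one using r
      by (simp add: field_simps)
  qed
  have "sqnorm (proj1 (\<alpha>, 0) \<theta>) = (cmod \<alpha>)\<^sup>2 * (1 + (rho \<theta> + cos \<theta>)\<^sup>2) / (4 * (rho \<theta>)\<^sup>2)"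
    unfolding sqnorm_def cf cs
    by (simp only: power_divide power_mult_distrib) (simp add: add_divide_distrib[symmetric] distrib_left)
  also have "1 + (rho \<theta> + cos \<theta>)\<^sup>2 = 2 * rho \<theta> * (rho \<theta> + cos \<theta>)"
    using rho_sq[of \<theta>] by (simp add: power2_eq_square algebra_simps)
  also have "(cmod \<alpha>)\<^sup>2 * (2 * rho \<theta> * (rho \<theta> + cos \<theta>)) / (4 * (rho \<theta>)\<^sup>2) = (cmod \<alpha>)\<^sup>2 * (1 + vel \<theta>) / 2"
    using r by (simp add: vel_def field_simps power2_eq_square)
  finally show ?thesis .
qed

text \<open>The two initial states are treated together: \<open>\<kappa> = 1\<close> for \<open>(0, e\<^bsup>i t\<^esup>)\<close> and \<open>\<kappa> = -1\<close> for
  \<open>(e\<^bsup>i t\<^esup>, 0)\<close>.\<close>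

lemma had_moments_polarized:
  assumes \<kappa>: "\<kappa>\<^sup>2 = 1" and unit: "sqnorm \<phi> = 1"
    and weight: "\<And>\<theta>. sqnorm (proj1 \<phi> \<theta>) = (1 - \<kappa> * vel \<theta>) / 2"
  shows "(\<lambda>n. had_E \<phi> n / real n) \<longlonglongrightarrow> \<kappa> * ((2 - sqrt 2) / 2)"
    and "(\<lambda>n. had_sd \<phi> n / real n) \<longlonglongrightarrow> sqrt ((sqrt 2 - 1) / 2)"
proof -
  have "sqnorm (proj2 \<phi> \<theta>) - sqnorm (proj1 \<phi> \<theta>) = \<kappa> * vel \<theta>" for \<theta>
    using sqnorm_proj1_add_proj2[of \<phi> \<theta>] unit weight[of \<theta>] by argo
  then have "limit_mean \<phi> = integral {0..2 * pi} (\<lambda>\<theta>. \<kappa> * ((vel \<theta>)\<^sup>2 / (2 * pi)))"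
    unfolding limit_mean_def by (intro integral_cong) (simp add: power2_eq_square)
  also have "\<dots> = \<kappa> * vel_sq_mean"
    unfolding vel_sq_mean_def by (rule integral_mult_right)
  finally have mean: "limit_mean \<phi> = \<kappa> * vel_sq_mean" .
  show "(\<lambda>n. had_E \<phi> n / real n) \<longlonglongrightarrow> \<kappa> * ((2 - sqrt 2) / 2)"
    using tendsto_had_moments(1)[OF unit] unfolding mean vel_sq_mean_eq .
  have var: "vel_sq_mean - (limit_mean \<phi>)\<^sup>2 = (sqrt 2 - 1) / 2"
    unfolding mean power_mult_distrib \<kappa> vel_sq_mean_eq by (simp add: power2_eq_square field_simps)
  show "(\<lambda>n. had_sd \<phi> n / real n) \<longlonglongrightarrow> sqrt ((sqrt 2 - 1) / 2)"
    using tendsto_had_moments(2)[OF unit] unfolding var .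
qed

section \<open>The limit density for the initial states \<open>(0, e\<^bsup>i t\<^esup>)\<close> and \<open>(e\<^bsup>i t\<^esup>, 0)\<close>\<close>

lemma vel_pi_minus: "vel (pi - \<theta>) = - vel \<theta>"
  by (simp add: vel_def rho_def cos_diff)

lemma vel_2pi_minus: "vel (2 * pi - \<theta>) = vel \<theta>"
  by (simp add: vel_def rho_def cos_diff)

lemma vel_0: "vel 0 = sqrt 2 / 2"
  by (simp add: vel_def rho_def real_div_sqrt)

lemma vel_pi: "vel pi = - (sqrt 2 / 2)"
  by (simp add: vel_def rho_def real_div_sqrt)

lemma has_real_derivative_rho: "(rho has_real_derivative - (cos \<theta> * sin \<theta>) / rho \<theta>) (at \<theta>)"
proof -
  have "((\<lambda>\<theta>. 1 + (cos \<theta>)\<^sup>2) has_real_derivative 2 * cos \<theta> * - sin \<theta>) (at \<theta>)"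
    by (auto intro!: derivative_eq_intros)
  from DERIV_chain2[OF DERIV_real_sqrt this] show ?thesis
    unfolding rho_def[abs_def] by (simp add: add_pos_nonneg field_simps)
qed

lemma has_real_derivative_vel: "(vel has_real_derivative - sin \<theta> / (rho \<theta>) ^ 3) (at \<theta>)"
proof -
  have r: "rho \<theta> > 0" by (rule rho_pos)
  have "(vel has_real_derivative
      (- sin \<theta> * rho \<theta> - - (cos \<theta> * sin \<theta>) / rho \<theta> * cos \<theta>) / (rho \<theta> ^ Suc (Suc 0))) (at \<theta>)"
    unfolding vel_def[abs_def] using r by (intro DERIV_quotient DERIV_cos has_real_derivative_rho) auto
  also have "- sin \<theta> * rho \<theta> - - (cos \<theta> * sin \<theta>) / rho \<theta> * cos \<theta> = - sin \<theta> * ((rho \<theta>)\<^sup>2 - (cos \<theta>)\<^sup>2) / rho \<theta>"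
    using r by (simp add: field_simps power2_eq_square)
  also have "(rho \<theta>)\<^sup>2 - (cos \<theta>)\<^sup>2 = 1"
    by (simp add: rho_sq)
  also have "- sin \<theta> * 1 / rho \<theta> / rho \<theta> ^ Suc (Suc 0) = - sin \<theta> / (rho \<theta>) ^ 3"
    using r by (simp add: power3_eq_cube)
  finally show ?thesis .
qed

lemma continuous_on_vel_derivative: "continuous_on S (\<lambda>\<theta>. sin \<theta> / (rho \<theta>) ^ 3)"
proof -
  have "rho \<theta> ^ 3 \<noteq> 0" for \<theta>
    using rho_pos[of \<theta>] by simp
  then show ?thesis
    by (intro continuous_intros) auto
qed

lemma one_minus_2_vel_sq: "1 - 2 * (vel \<theta>)\<^sup>2 = (sin \<theta> / rho \<theta>)\<^sup>2"
proof -
  have r: "(rho \<theta>)\<^sup>2 > 0" using rho_pos[of \<theta>] by simp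
  have "1 - 2 * (vel \<theta>)\<^sup>2 = ((rho \<theta>)\<^sup>2 - 2 * (cos \<theta>)\<^sup>2) / (rho \<theta>)\<^sup>2"
    unfolding vel_def power_divide using r by (simp add: diff_divide_distrib)
  also have "(rho \<theta>)\<^sup>2 - 2 * (cos \<theta>)\<^sup>2 = (sin \<theta>)\<^sup>2"
    unfolding rho_sq using sin_cos_squared_add[of \<theta>] by linarith
  finally show ?thesis
    by (simp add: power_divide)
qed

lemma abs_vel_less: "0 < \<theta> \<Longrightarrow> \<theta> < pi \<Longrightarrow> \<bar>vel \<theta>\<bar> < sqrt 2 / 2"
proof -
  assume "0 < \<theta>" "\<theta> < pi"
  then have "(sin \<theta> / rho \<theta>)\<^sup>2 > 0"
    using rho_pos[of \<theta>] sin_gt_zero[of \<theta>] by simp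
  then have "(vel \<theta>)\<^sup>2 < 1 / 2"
    using one_minus_2_vel_sq[of \<theta>] by linarith
  then have "sqrt ((vel \<theta>)\<^sup>2) < sqrt (1 / 2)"
    by (rule real_sqrt_less_mono)
  also have "sqrt (1 / 2) = sqrt 2 / 2"
    by (simp add: real_sqrt_divide field_simps)
  finally show ?thesis by simp
qed

definition konno_density :: "real \<Rightarrow> real \<Rightarrow> real" where
  "konno_density \<kappa> x = 1 / (pi * (1 - \<kappa> * x) * sqrt (1 - 2 * x\<^sup>2))"

definition konno_law :: "real \<Rightarrow> real measure" where
  "konno_law \<kappa> = density lborel (\<lambda>x. indicator {- sqrt 2 / 2 <..< sqrt 2 / 2} x * ennreal (konno_density \<kappa> x))"

lemma konno_density_measurable [measurable]: "konno_density \<kappa> \<in> borel_measurable borel"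
  unfolding konno_density_def[abs_def] by measurable

lemma konno_density_pos:
  assumes "\<kappa>\<^sup>2 = 1" and "\<bar>x\<bar> < sqrt 2 / 2"
  shows "konno_density \<kappa> x > 0"
proof -
  have "\<bar>x\<bar>\<^sup>2 < (sqrt 2 / 2)\<^sup>2"
    using assms(2) by (intro power_strict_mono) auto
  then have x2: "x\<^sup>2 < 1 / 2" by (simp add: power_divide)
  then have "\<bar>x\<bar> < 1" by (simp add: abs_square_less_1[symmetric])
  then have "1 - \<kappa> * x > 0"
    using assms(1) by (auto simp: power2_eq_1_iff)
  with x2 show ?thesis
    unfolding konno_density_def by simp
qed

text \<open>The substitution \<open>x = - vel \<theta>\<close>, \<open>0 < \<theta> < \<pi>\<close>, carries the Konno density to the weight
  \<open>(1 - \<kappa> vel \<theta>) / \<pi>\<close>.\<close>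

lemma konno_density_vel:
  assumes "\<kappa>\<^sup>2 = 1" and "0 < \<theta>" and "\<theta> < pi"
  shows "konno_density \<kappa> (- vel \<theta>) * (sin \<theta> / (rho \<theta>) ^ 3) = (1 - \<kappa> * vel \<theta>) / pi"
proof -
  have r: "rho \<theta> > 0" and s: "sin \<theta> > 0"
    using assms by (simp_all add: rho_pos sin_gt_zero)
  have "(1 + \<kappa> * vel \<theta>) * (1 - \<kappa> * vel \<theta>) * (rho \<theta>)\<^sup>2 = (rho \<theta>)\<^sup>2 - \<kappa>\<^sup>2 * (cos \<theta>)\<^sup>2"
    using r unfolding vel_def by (simp add: field_simps power2_eq_square)
  also have "\<dots> = 1"
    using assms(1) by (simp add: rho_sq)
  finally have prod: "(1 + \<kappa> * vel \<theta>) * (1 - \<kappa> * vel \<theta>) * (rho \<theta>)\<^sup>2 = 1" .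
  then have nz: "(1 + \<kappa> * vel \<theta>) * (rho \<theta>)\<^sup>2 \<noteq> 0" by auto
  have cancel: "1 / (P * (sin \<theta> / rho \<theta>)) * (sin \<theta> / rho \<theta> ^ 3) = 1 / (P * (rho \<theta>)\<^sup>2)" for P
    using r s by (simp add: field_simps power2_eq_square power3_eq_cube)
  have "konno_density \<kappa> (- vel \<theta>) = 1 / (pi * (1 + \<kappa> * vel \<theta>) * (sin \<theta> / rho \<theta>))"
    unfolding konno_density_def power2_minus one_minus_2_vel_sq using r s by simp
  then have "konno_density \<kappa> (- vel \<theta>) * (sin \<theta> / (rho \<theta>) ^ 3) = 1 / (pi * (1 + \<kappa> * vel \<theta>) * (rho \<theta>)\<^sup>2)"
    by (simp only: cancel)
  also have "\<dots> = (1 - \<kappa> * vel \<theta>) / pi"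
  proof -
    have "1 - \<kappa> * vel \<theta> = 1 / ((1 + \<kappa> * vel \<theta>) * (rho \<theta>)\<^sup>2)"
      using prod nz by (simp add: eq_divide_eq mult.commute mult.left_commute)
    then show ?thesis by (simp add: mult.assoc)
  qed
  finally show ?thesis .
qed

definition vel_weight :: "real \<Rightarrow> real \<Rightarrow> real" where
  "vel_weight \<kappa> \<theta> = indicator {0<..<pi} \<theta> * ((1 - \<kappa> * vel \<theta>) / pi)"

definition vel_law :: "real \<Rightarrow> real measure" where
  "vel_law \<kappa> = distr (density lborel (\<lambda>\<theta>. ennreal (vel_weight \<kappa> \<theta>))) borel (\<lambda>\<theta>. - vel \<theta>)"

lemma vel_weight_measurable [measurable]: "vel_weight \<kappa> \<in> borel_measurable borel"
  unfolding vel_weight_def[abs_def] by measurable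

lemma vel_weight_nonneg:
  assumes "\<kappa>\<^sup>2 = 1"
  shows "vel_weight \<kappa> \<theta> \<ge> 0"
proof -
  have "\<bar>\<kappa>\<bar> = 1"
    using assms by (auto simp: power2_eq_1_iff)
  then have "\<bar>\<kappa> * vel \<theta>\<bar> \<le> 1"
    using abs_vel_le[of \<theta>] by (simp add: abs_mult)
  then show ?thesis
    unfolding vel_weight_def by simp
qed

lemma konno_density_vel_indicator:
  assumes "\<kappa>\<^sup>2 = 1"
  shows "indicator {- sqrt 2 / 2 <..< sqrt 2 / 2} (- vel \<theta>) * konno_density \<kappa> (- vel \<theta>)
      * (sin \<theta> / (rho \<theta>) ^ 3) * indicator {0..pi} \<theta> = vel_weight \<kappa> \<theta>"
proof (cases "0 < \<theta> \<and> \<theta> < pi")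
  case True
  then have "- vel \<theta> \<in> {- sqrt 2 / 2 <..< sqrt 2 / 2}"
    using abs_vel_less[of \<theta>] by (auto simp: abs_less_iff)
  with True show ?thesis
    using konno_density_vel[OF assms, of \<theta>] by (simp add: vel_weight_def)
next
  case False
  then have "\<theta> = 0 \<or> \<theta> = pi \<or> \<theta> \<notin> {0..pi}" by auto
  with False show ?thesis
    by (auto simp: vel_weight_def vel_0 vel_pi)
qed

lemma emeasure_konno_law:
  assumes \<kappa>: "\<kappa>\<^sup>2 = 1" and [measurable]: "A \<in> sets borel"
  shows "emeasure (konno_law \<kappa>) A = (\<integral>\<^sup>+ x. ennreal (indicator {- sqrt 2 / 2 <..< sqrt 2 / 2} x
      * konno_density \<kappa> x * indicator A x * indicator {- vel 0..- vel pi} x) \<partial>lborel)"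
  unfolding konno_law_def
proof (subst emeasure_density, simp, simp, intro nn_integral_cong)
  fix x
  have "x \<in> {- vel 0..- vel pi}" if "x \<in> {- sqrt 2 / 2 <..< sqrt 2 / 2}"
    using that by (simp add: vel_0 vel_pi)
  then show "indicator {- sqrt 2 / 2 <..< sqrt 2 / 2} x * ennreal (konno_density \<kappa> x) * indicator A x =
      ennreal (indicator {- sqrt 2 / 2 <..< sqrt 2 / 2} x * konno_density \<kappa> x * indicator A x
        * indicator {- vel 0..- vel pi} x)"
    using konno_density_pos[OF \<kappa>, of x] by (auto simp: indicator_def abs_less_iff)
qed

lemma emeasure_vel_law:
  assumes [measurable]: "A \<in> sets borel"
  shows "emeasure (vel_law \<kappa>) A =
    (\<integral>\<^sup>+ \<theta>. ennreal (vel_weight \<kappa> \<theta>) * indicator ((\<lambda>\<theta>. - vel \<theta>) -` A \<inter> space lborel) \<theta> \<partial>lborel)"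
proof -
  have "(\<lambda>\<theta>. - vel \<theta>) -` A \<in> sets lborel"
    using measurable_sets[of "\<lambda>\<theta>. - vel \<theta>" lborel borel A] by simp
  then show ?thesis
    unfolding vel_law_def by (subst emeasure_distr) (simp_all add: emeasure_density)
qed

lemma konno_law_eq_vel_law:
  assumes \<kappa>: "\<kappa>\<^sup>2 = 1"
  shows "konno_law \<kappa> = vel_law \<kappa>"
proof (rule measure_eqI)
  show "sets (konno_law \<kappa>) = sets (vel_law \<kappa>)"
    by (simp add: konno_law_def vel_law_def)
  fix A assume "A \<in> sets (konno_law \<kappa>)"
  then have A [measurable]: "A \<in> sets borel" by (simp add: konno_law_def)
  define F where "F x = indicator {- sqrt 2 / 2 <..< sqrt 2 / 2} x * konno_density \<kappa> x * indicator A x" for x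
  have [measurable]: "F \<in> borel_measurable borel"
    unfolding F_def[abs_def] by measurable
  have "emeasure (konno_law \<kappa>) A = (\<integral>\<^sup>+ x. ennreal (F x * indicator {- vel 0..- vel pi} x) \<partial>lborel)"
    unfolding emeasure_konno_law[OF \<kappa> A] F_def ..
  also have "\<dots> = (\<integral>\<^sup>+ \<theta>. ennreal (F (- vel \<theta>) * (sin \<theta> / (rho \<theta>) ^ 3) * indicator {0..pi} \<theta>) \<partial>lborel)"
  proof (rule nn_integral_substitution[where g = "\<lambda>\<theta>. - vel \<theta>" and g' = "\<lambda>\<theta>. sin \<theta> / (rho \<theta>) ^ 3"])
    show "set_borel_measurable borel {- vel 0..- vel pi} F"
      unfolding set_borel_measurable_def by measurable
    show "((\<lambda>\<theta>. - vel \<theta>) has_real_derivative sin \<theta> / (rho \<theta>) ^ 3) (at \<theta>)" for \<theta>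
      using DERIV_minus[OF has_real_derivative_vel[of \<theta>]] by simp
    show "0 \<le> sin \<theta> / (rho \<theta>) ^ 3" if "\<theta> \<in> {0..pi}" for \<theta>
      using that rho_pos[of \<theta>] by (simp add: sin_ge_zero)
  qed (simp_all add: continuous_on_vel_derivative)
  also have "\<dots> = (\<integral>\<^sup>+ \<theta>. ennreal (vel_weight \<kappa> \<theta>) * indicator ((\<lambda>\<theta>. - vel \<theta>) -` A \<inter> space lborel) \<theta> \<partial>lborel)"
  proof (intro nn_integral_cong)
    fix \<theta>
    have "F (- vel \<theta>) * (sin \<theta> / (rho \<theta>) ^ 3) * indicator {0..pi} \<theta> =
        indicator {- sqrt 2 / 2 <..< sqrt 2 / 2} (- vel \<theta>) * konno_density \<kappa> (- vel \<theta>)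
          * (sin \<theta> / (rho \<theta>) ^ 3) * indicator {0..pi} \<theta> * indicator A (- vel \<theta>)"
      by (simp add: F_def mult_ac)
    also have "\<dots> = vel_weight \<kappa> \<theta> * indicator A (- vel \<theta>)"
      unfolding konno_density_vel_indicator[OF \<kappa>] ..
    finally show "ennreal (F (- vel \<theta>) * (sin \<theta> / (rho \<theta>) ^ 3) * indicator {0..pi} \<theta>) =
        ennreal (vel_weight \<kappa> \<theta>) * indicator ((\<lambda>\<theta>. - vel \<theta>) -` A \<inter> space lborel) \<theta>"
      using vel_weight_nonneg[OF \<kappa>, of \<theta>] by (simp add: indicator_def)
  qed
  also have "\<dots> = emeasure (vel_law \<kappa>) A"
    by (rule emeasure_vel_law[OF A, symmetric])
  finally show "emeasure (konno_law \<kappa>) A = emeasure (vel_law \<kappa>) A" .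
qed

lemma integral_vel_weight:
  fixes Y :: "real \<Rightarrow> 'b::euclidean_space"
  assumes Y: "continuous_on UNIV Y"
  shows "integrable lborel (\<lambda>\<theta>. vel_weight \<kappa> \<theta> *\<^sub>R Y \<theta>)"
    and "(LINT \<theta>|lborel. vel_weight \<kappa> \<theta> *\<^sub>R Y \<theta>) = integral {0..pi} (\<lambda>\<theta>. ((1 - \<kappa> * vel \<theta>) / pi) *\<^sub>R Y \<theta>)"
proof -
  let ?Z = "\<lambda>\<theta>. ((1 - \<kappa> * vel \<theta>) / pi) *\<^sub>R Y \<theta>"
  have "continuous_on {0..pi} ?Z"
    by (intro continuous_intros continuous_on_subset[OF Y]) auto
  note Z = integrable_lborel_indicator_Icc[OF this]
  have ae: "AE \<theta> in lborel. indicator {0..pi} \<theta> *\<^sub>R ?Z \<theta> = vel_weight \<kappa> \<theta> *\<^sub>R Y \<theta>"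
    using AE_conjI[OF AE_lborel_singleton[of 0] AE_lborel_singleton[of pi]]
    by eventually_elim (auto simp: vel_weight_def indicator_def)
  have [measurable]: "Y \<in> borel_measurable borel"
    by (rule borel_measurable_continuous_onI[OF Y])
  show "integrable lborel (\<lambda>\<theta>. vel_weight \<kappa> \<theta> *\<^sub>R Y \<theta>)"
    using integrable_cong_AE[OF _ _ ae] Z(1) by (simp add: vel_weight_def)
  have "(LINT \<theta>|lborel. vel_weight \<kappa> \<theta> *\<^sub>R Y \<theta>) = (LINT \<theta>|lborel. indicator {0..pi} \<theta> *\<^sub>R ?Z \<theta>)"
    by (rule integral_cong_AE[OF _ _ ae[THEN AE_mp, OF AE_I2], symmetric]) (auto simp: vel_weight_def)
  then show "(LINT \<theta>|lborel. vel_weight \<kappa> \<theta> *\<^sub>R Y \<theta>) = integral {0..pi} ?Z"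
    unfolding Z(2) .
qed

lemma char_vel_law:
  assumes "\<kappa>\<^sup>2 = 1"
  shows "char (vel_law \<kappa>) t = integral {0..pi} (\<lambda>\<theta>. ((1 - \<kappa> * vel \<theta>) / pi) *\<^sub>R iexp (t * - vel \<theta>))"
proof -
  have "char (vel_law \<kappa>) t = (LINT \<theta>|lborel. vel_weight \<kappa> \<theta> *\<^sub>R iexp (t * - vel \<theta>))"
    unfolding char_def vel_law_def
    by (subst integral_distr, simp, simp, subst integral_density) (simp_all add: vel_weight_nonneg[OF assms])
  also have "\<dots> = integral {0..pi} (\<lambda>\<theta>. ((1 - \<kappa> * vel \<theta>) / pi) *\<^sub>R iexp (t * - vel \<theta>))"
    by (rule integral_vel_weight(2)) (intro continuous_intros)
  finally show ?thesis .
qed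

lemma integral_reflect_shift_real:
  fixes f :: "real \<Rightarrow> 'a::euclidean_space"
  shows "integral {a..b} (\<lambda>x. f (c - x)) = integral {c - b..c - a} f"
proof -
  have "integral {a..b} (\<lambda>x. f (c - x)) = integral {- b..- a} (f \<circ> (+) c)"
    using Henstock_Kurzweil_Integration.integral_reflect_real[of b a "\<lambda>x. f (c - x)"] by (simp add: o_def)
  also have "\<dots> = integral {c - b..c - a} f"
    using integral_shift_Icc_real[of "- b" "- a" f c] by (simp add: algebra_simps)
  finally show ?thesis .
qed

text \<open>\<open>vel\<close> is symmetric about \<open>\<pi>\<close> and antisymmetric about \<open>\<pi> / 2\<close>.\<close>

lemma integral_vel_symmetric:
  fixes H :: "real \<Rightarrow> complex"
  assumes H: "continuous_on UNIV H"
  shows "integral {0..2 * pi} (\<lambda>\<theta>. H (vel \<theta>) + H (- vel \<theta>)) = 4 * integral {0..pi} (\<lambda>\<theta>. H (vel \<theta>))"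
proof -
  let ?G = "\<lambda>\<theta>. H (vel \<theta>) + H (- vel \<theta>)"
  have cont: "continuous_on S (\<lambda>\<theta>. H (vel \<theta>))" "continuous_on S (\<lambda>\<theta>. H (- vel \<theta>))" for S
    by (intro continuous_on_compose2[OF H] continuous_intros; simp)+
  have "?G integrable_on {0..2 * pi}"
    by (intro integrable_continuous_interval continuous_on_add cont)
  then have "integral {0..2 * pi} ?G = integral {0..pi} ?G + integral {pi..2 * pi} ?G"
    by (intro Henstock_Kurzweil_Integration.integral_combine[symmetric]) auto
  also have "integral {pi..2 * pi} ?G = integral {pi..2 * pi} (\<lambda>\<theta>. ?G (2 * pi - \<theta>))"
    unfolding vel_2pi_minus ..
  also have "\<dots> = integral {0..pi} ?G"
    using integral_reflect_shift_real[of pi "2 * pi" ?G "2 * pi"] by simp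
  also have "integral {0..pi} ?G = integral {0..pi} (\<lambda>\<theta>. H (vel \<theta>)) + integral {0..pi} (\<lambda>\<theta>. H (- vel \<theta>))"
    using cont by (intro integral_add integrable_continuous_interval)
  also have "integral {0..pi} (\<lambda>\<theta>. H (- vel \<theta>)) = integral {0..pi} (\<lambda>\<theta>. H (vel (pi - \<theta>)))"
    unfolding vel_pi_minus ..
  also have "\<dots> = integral {0..pi} (\<lambda>\<theta>. H (vel \<theta>))"
    using integral_reflect_shift_real[of 0 pi "\<lambda>\<theta>. H (vel \<theta>)" pi] by simp
  finally show ?thesis
    by simp
qed

lemma char_limit_eq_char_vel_law:
  assumes \<kappa>: "\<kappa>\<^sup>2 = 1" and unit: "sqnorm \<phi> = 1"
    and weight: "\<And>\<theta>. sqnorm (proj1 \<phi> \<theta>) = (1 - \<kappa> * vel \<theta>) / 2"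
  shows "char_limit \<phi> t = char (vel_law \<kappa>) t"
proof -
  define H where "H y = complex_of_real ((1 - \<kappa> * y) / 2) * iexp (- t * y)" for y
  have weight2: "sqnorm (proj2 \<phi> \<theta>) = (1 + \<kappa> * vel \<theta>) / 2" for \<theta>
    using sqnorm_proj1_add_proj2[of \<phi> \<theta>] unit weight[of \<theta>] by argo
  have integrand: "char_limit_integrand \<phi> t = (\<lambda>\<theta>. H (vel \<theta>) + H (- vel \<theta>))"
    unfolding char_limit_integrand_def H_def weight weight2 by (simp add: fun_eq_iff)
  have "continuous_on UNIV H"
    unfolding H_def by (intro continuous_intros) simp
  then have "char_limit \<phi> t = 4 * integral {0..pi} (\<lambda>\<theta>. H (vel \<theta>)) / (2 * pi)"
    unfolding char_limit_def integrand by (simp add: integral_vel_symmetric)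
  also have "\<dots> = integral {0..pi} (\<lambda>\<theta>. complex_of_real (2 / pi) * H (vel \<theta>))"
    by (simp add: integral_mult_right field_simps)
  also have "\<dots> = char (vel_law \<kappa>) t"
    unfolding char_vel_law[OF \<kappa>] H_def by (intro integral_cong) (simp add: scaleR_conv_of_real field_simps)
  finally show ?thesis .
qed

text \<open>The total mass of \<open>vel_law \<kappa>\<close> is read off from its characteristic function at \<open>0\<close>.\<close>

lemma limit_law_eq_konno_law:
  assumes \<kappa>: "\<kappa>\<^sup>2 = 1" and unit: "sqnorm \<phi> = 1"
    and weight: "\<And>\<theta>. sqnorm (proj1 \<phi> \<theta>) = (1 - \<kappa> * vel \<theta>) / 2"
  shows "limit_law \<phi> = konno_law \<kappa>"
proof -
  have char_eq: "char (vel_law \<kappa>) t = char (limit_law \<phi>) t" for t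
    using char_limit_eq_char_vel_law[OF \<kappa> unit weight] char_limit_law[OF unit] by simp
  have mass: "(LINT \<theta>|lborel. vel_weight \<kappa> \<theta>) = 1"
  proof -
    have "char (vel_law \<kappa>) 0 = (LINT \<theta>|lborel. complex_of_real (vel_weight \<kappa> \<theta>))"
      unfolding char_def vel_law_def
      by (subst integral_distr, simp, simp, subst integral_density)
         (simp_all add: vel_weight_nonneg[OF \<kappa>] scaleR_conv_of_real)
    then have "complex_of_real (LINT \<theta>|lborel. vel_weight \<kappa> \<theta>) = 1"
      using char_eq[of 0] real_distribution.char_zero[OF real_distribution_limit_law[OF unit]] by simp
    then show ?thesis by (simp add: complex_eq_iff)
  qed
  have "emeasure (vel_law \<kappa>) (space (vel_law \<kappa>)) = (\<integral>\<^sup>+ \<theta>. ennreal (vel_weight \<kappa> \<theta>) \<partial>lborel)"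
    unfolding vel_law_def by (subst emeasure_distr) (simp_all add: emeasure_density)
  also have "\<dots> = 1"
    using integral_vel_weight(1)[of "\<lambda>_. 1::real" \<kappa>] mass
    by (subst nn_integral_eq_integral) (simp_all add: vel_weight_nonneg[OF \<kappa>])
  finally have "real_distribution (vel_law \<kappa>)"
    by (intro real_distribution.intro real_distribution_axioms.intro prob_spaceI) (simp_all add: vel_law_def)
  then have "limit_law \<phi> = vel_law \<kappa>"
    using char_eq by (intro Levy_uniqueness[OF real_distribution_limit_law[OF unit]]) auto
  then show ?thesis
    using konno_law_eq_vel_law[OF \<kappa>] by simp
qed

theorem weak_conv_konno_law:
  assumes "\<kappa>\<^sup>2 = 1" and unit: "sqnorm \<phi> = 1"
    and "\<And>\<theta>. sqnorm (proj1 \<phi> \<theta>) = (1 - \<kappa> * vel \<theta>) / 2"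
  shows "weak_conv (had_cdf_scaled \<phi>) (cdf (konno_law \<kappa>))"
proof -
  have "(\<lambda>n. cdf (scaled_law \<phi> n)) = had_cdf_scaled \<phi>"
    by (intro ext) (simp add: cdf_scaled_law[OF unit])
  with weak_conv_scaled_law[OF unit] show ?thesis
    unfolding weak_conv_m_def limit_law_eq_konno_law[OF assms] by simp
qed

theorem mainTheorem5:
  shows "(\<forall>\<alpha> \<beta>. cmod \<alpha> = 1 / sqrt 2 \<and> cmod \<beta> = 1 / sqrt 2 \<and>
            \<alpha> * cnj \<beta> + cnj \<alpha> * \<beta> = 0 \<longrightarrow>
            (\<forall>n. had_E (\<alpha>, \<beta>) n = 0) \<and>
            (\<lambda>n. had_sd (\<alpha>, \<beta>) n / real n) \<longlonglongrightarrow> sqrt ((2 - sqrt 2) / 2))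
   \<and> (\<forall>\<theta>::real. 0 \<le> \<theta> \<and> \<theta> < 2 * pi \<longrightarrow>
        weak_conv (had_cdf_scaled (0, exp (\<i> * complex_of_real \<theta>)))
          (cdf (density lborel (\<lambda>x. indicator {- sqrt 2 / 2 <..< sqrt 2 / 2} x *
                 ennreal (1 / (pi * (1 - x) * sqrt (1 - 2 * x\<^sup>2)))))) \<and>
        (\<lambda>n. had_E (0, exp (\<i> * complex_of_real \<theta>)) n / real n) \<longlonglongrightarrow> (2 - sqrt 2) / 2 \<and>
        (\<lambda>n. had_sd (0, exp (\<i> * complex_of_real \<theta>)) n / real n) \<longlonglongrightarrow> sqrt ((sqrt 2 - 1) / 2))
   \<and> (\<forall>\<theta>::real. 0 \<le> \<theta> \<and> \<theta> < 2 * pi \<longrightarrow>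
        weak_conv (had_cdf_scaled (exp (\<i> * complex_of_real \<theta>), 0))
          (cdf (density lborel (\<lambda>x. indicator {- sqrt 2 / 2 <..< sqrt 2 / 2} x *
                 ennreal (1 / (pi * (1 + x) * sqrt (1 - 2 * x\<^sup>2)))))) \<and>
        (\<lambda>n. had_sd (exp (\<i> * complex_of_real \<theta>), 0) n / real n) \<longlonglongrightarrow> sqrt ((sqrt 2 - 1) / 2))"
proof -
  have unit: "sqnorm (0, iexp t) = 1" "sqnorm (iexp t, 0) = 1" for t
    by simp_all
  have weight: "sqnorm (proj1 (0, iexp t) \<theta>) = (1 - 1 * vel \<theta>) / 2"
    "sqnorm (proj1 (iexp t, 0) \<theta>) = (1 - (- 1) * vel \<theta>) / 2" for t \<theta>
    by (simp_all add: sqnorm_proj1_zero_fst sqnorm_proj1_zero_snd)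
  have konno: "konno_law 1 = density lborel (\<lambda>x. indicator {- sqrt 2 / 2 <..< sqrt 2 / 2} x *
                 ennreal (1 / (pi * (1 - x) * sqrt (1 - 2 * x\<^sup>2))))"
    "konno_law (- 1) = density lborel (\<lambda>x. indicator {- sqrt 2 / 2 <..< sqrt 2 / 2} x *
                 ennreal (1 / (pi * (1 + x) * sqrt (1 - 2 * x\<^sup>2))))"
    by (simp_all add: konno_law_def konno_density_def)
  note part_b = weak_conv_konno_law[of 1, OF _ unit(1) weight(1)]
      had_moments_polarized[of 1, OF _ unit(1) weight(1)]
    and part_c = weak_conv_konno_law[of "- 1", OF _ unit(2) weight(2)]
      had_moments_polarized(2)[of "- 1", OF _ unit(2) weight(2)]
  show ?thesis
    using had_moments_symmetric part_b part_c unfolding konno by simp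
qed

end
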